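(* Consider a discrete convex single-parameter auction setting with feasibility set $\mathcal A$ and objective $\mathsf{Obj}_\alpha(M)=\alpha\,\mathsf{Rev}(M)+(1-\alpha)\,\mathsf{SW}(M)$ for a fixed $\alpha\in[0,1]$. Then: (1) If the setting is TDI, there exists an auction maximizing $\mathsf{Obj}_\alpha$ over all feasible BIC auctions which is integral. (2) Every feasible DSIC auction that maximizes $\mathsf{Obj}_\alpha$ over all feasible DSIC auctions also maximizes $\mathsf{Obj}_\alpha$ over all feasible BIC auctions. (3) Let $M^\alpha=(\mathbf a,\mathbf p)$ be defined by: for each $\mathbf v\in\mathbf V$, $\mathbf a(\mathbf v)\in\arg\max_{x\in\mathcal A}\sum_{i=1}^n\bar\varphi^\alpha_i(v_i)x_i$, where the selected maximizer depends only on the vector $(\bar\varphi^\alpha_1(v_1),\dots,\bar\varphi^\alpha_n(v_n))$ (a fixed deterministic tie-breaking rule), and $\mathbf p$ is given by the payment formula $p_i(v_{i,k},\mathbf v_{-i})=v_{i,k}\,a_i(v_{i,k},\mathbf v_{-i})-\sum_{l=1}^{k-1}(v_{i,l+1}-v_{i,l})\,a_i(v_{i,l},\mathbf v_{-i})$. Then $M^\alpha$ is DSIC and maximizes $\mathsf{Obj}_\alpha$ over all feasible BIC auctions.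
   Context: There are $n\ge1$ bidders; bidder $i$ has finite value set $V_i=\{v_{i,1}<\dots<v_{i,K_i}\}\subset\mathbb R_+$ and independent value with pmf $f_i$, $f_i(v)>0$ on $V_i$, cdf $F_i$; $\mathbf V=\prod_iV_i$, $\mathbf F$ the product distribution, $\mathbf F_{-i}$ the product over $j\ne i$. Feasibility: $\mathcal A=\{x\in\mathbb R^n: g_j(x)\le0,\ j\in[m]\}\subseteq\mathbb R^n_+$, with each $g_j$ convex and continuously differentiable, and $\mathcal A$ nonempty and compact; an auction $(\mathbf a,\mathbf p)$, $\mathbf a:\mathbf V\to\mathbb R^n_+$, $\mathbf p:\mathbf V\to\mathbb R^n$, is feasible if $\mathbf a(\mathbf v)\in\mathcal A$ for all $\mathbf v$. Utility $u_i(\mathbf b;v_i)=a_i(\mathbf b)v_i-p_i(\mathbf b)$; bids extended to $\bar V_i=V_i\cup\{\varnothing\}$ with $a_i(\varnothing,\cdot)=p_i(\varnothing,\cdot)=0$. DSIC: $u_i(v_i,\mathbf b_{-i};v_i)\ge u_i(b_i,\mathbf b_{-i};v_i)$ for all $i$, $v_i\in V_i$, $b_i\in\bar V_i$, $\mathbf b_{-i}$. BIC: with $A_i(b_i)=\mathbb E_{\mathbf v_{-i}\sim\mathbf F_{-i}}[a_i(b_i,\mathbf v_{-i})]$, $P_i(b_i)=\mathbb E_{\mathbf v_{-i}\sim\mathbf F_{-i}}[p_i(b_i,\mathbf v_{-i})]$, require $A_i(v_i)v_i-P_i(v_i)\ge A_i(b_i)v_i-P_i(b_i)$ for all $i,v_i\in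 V_i,b_i\in\bar V_i$. $\mathsf{Rev}(M)=\mathbb E_{\mathbf v\sim\mathbf F}[\sum_ip_i(\mathbf v)]$, $\mathsf{SW}(M)=\mathbb E_{\mathbf v\sim\mathbf F}[\sum_ia_i(\mathbf v)v_i]$. An auction is integral if $\mathbf a(\mathbf v)\in\mathbb N^n$ for all $\mathbf v$. TDI setting: $\mathcal A=\{x\in\mathbb R^n:Gx\le b\}$ for a rational matrix $G$ and integral vector $b$ such that the system $Gx\le b$ is totally dual integral: for every integral $c\in\mathbb Z^n$ for which $\min\{\psi^\top b:\psi\ge0,\ G^\top\psi=c\}$ is finite, this minimum is attained by an integral $\psi$. Generalized virtual values: $\varphi^\alpha_i(v_{i,k})=v_{i,k}-\alpha(v_{i,k+1}-v_{i,k})\frac{1-F_i(v_{i,k})}{f_i(v_{i,k})}$, $k\in[K_i]$ (second term $0$ for $k=K_i$). Ironed generalized virtual values: let $F^{(i)}_0=0$, $F^{(i)}_k=F_i(v_{i,k})$, $S^{(i)}_0=0$, $S^{(i)}_k=\sum_{j\le k}\varphi^\alpha_i(v_{i,j})f_i(v_{i,j})$, $S^{(i)}$ the piecewise linear interpolation of the points $(F^{(i)}_k,S^{(i)}_k)$, and $H^{(i)}$ its lower convex envelope; $\bar\varphi^\alpha_i(v_{i,k})$ is the slope of $H^{(i)}$ on $(F^{(i)}_{k-1},F^{(i)}_k)$. *)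

theory Defs
  imports "HOL-Analysis.Analysis"
begin

(* Bidders are indexed by a finite type 'n (so n = CARD('n) >= 1).
   V i : finite value set of bidder i, f i : pmf of bidder i on V i.
   Values v_{i,k}, k = 1..K_i, are the elements of V i in increasing order. *)

definition vval :: "('n \<Rightarrow> real set) \<Rightarrow> 'n \<Rightarrow> nat \<Rightarrow> real" where
  "vval V i k = sorted_list_of_set (V i) ! (k - 1)"

definition vidx :: "('n \<Rightarrow> real set) \<Rightarrow> 'n \<Rightarrow> real \<Rightarrow> nat" where
  "vidx V i x = (THE k. k \<in> {1..card (V i)} \<and> vval V i k = x)"

definition cdf :: "('n \<Rightarrow> real set) \<Rightarrow> ('n \<Rightarrow> real \<Rightarrow> real) \<Rightarrow> 'n \<Rightarrow> real \<Rightarrow> real" where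
  "cdf V f i x = (\<Sum>w\<in>{w\<in>V i. w \<le> x}. f i w)"

definition gvv :: "real \<Rightarrow> ('n \<Rightarrow> real set) \<Rightarrow> ('n \<Rightarrow> real \<Rightarrow> real) \<Rightarrow> 'n \<Rightarrow> real \<Rightarrow> real" where
  "gvv \<alpha> V f i x = (let k = vidx V i x in
     x - \<alpha> * (if k < card (V i) then (vval V i (k + 1) - x) * (1 - cdf V f i x) / f i x else 0))"

definition Fpt :: "('n \<Rightarrow> real set) \<Rightarrow> ('n \<Rightarrow> real \<Rightarrow> real) \<Rightarrow> 'n \<Rightarrow> nat \<Rightarrow> real" where
  "Fpt V f i k = (if k = 0 then 0 else cdf V f i (vval V i k))"

definition Spt :: "real \<Rightarrow> ('n \<Rightarrow> real set) \<Rightarrow> ('n \<Rightarrow> real \<Rightarrow> real) \<Rightarrow> 'n \<Rightarrow> nat \<Rightarrow> real" where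
  "Spt \<alpha> V f i k = (\<Sum>j\<in>{1..k}. gvv \<alpha> V f i (vval V i j) * f i (vval V i j))"

(* S^{(i)}: piecewise linear interpolation of the points (F_k, S_k), k = 0..K_i, on [0,1] *)
definition Sinterp :: "real \<Rightarrow> ('n \<Rightarrow> real set) \<Rightarrow> ('n \<Rightarrow> real \<Rightarrow> real) \<Rightarrow> 'n \<Rightarrow> real \<Rightarrow> real" where
  "Sinterp \<alpha> V f i t =
    (if \<exists>k\<in>{1..card (V i)}. Fpt V f i (k - 1) \<le> t \<and> t \<le> Fpt V f i k then
       (let k = (LEAST k. 1 \<le> k \<and> k \<le> card (V i) \<and> Fpt V f i (k - 1) \<le> t \<and> t \<le> Fpt V f i k)
        in Spt \<alpha> V f i (k - 1) + (t - Fpt V f i (k - 1)) / (Fpt V f i k - Fpt V f i (k - 1))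
             * (Spt \<alpha> V f i k - Spt \<alpha> V f i (k - 1)))
     else 0)"

definition Hconv :: "real \<Rightarrow> ('n \<Rightarrow> real set) \<Rightarrow> ('n \<Rightarrow> real \<Rightarrow> real) \<Rightarrow> 'n \<Rightarrow> real \<Rightarrow> real" where
  "Hconv \<alpha> V f i t =
    (SUP h\<in>{h. convex_on {0..1} h \<and> (\<forall>s\<in>{0..1}. h s \<le> Sinterp \<alpha> V f i s)}. h t)"

(* ironed generalized virtual value: slope of H on (F_{k-1}, F_k), H being affine there *)
definition ivv :: "real \<Rightarrow> ('n \<Rightarrow> real set) \<Rightarrow> ('n \<Rightarrow> real \<Rightarrow> real) \<Rightarrow> 'n \<Rightarrow> real \<Rightarrow> real" where
  "ivv \<alpha> V f i x = (let k = vidx V i x in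
     (Hconv \<alpha> V f i (Fpt V f i k) - Hconv \<alpha> V f i (Fpt V f i (k - 1)))
       / (Fpt V f i k - Fpt V f i (k - 1)))"

(* Auctions: a, p :: value profile => bidder => real; profiles are PiE UNIV V *)

definition prof_prob :: "('n::finite \<Rightarrow> real \<Rightarrow> real) \<Rightarrow> ('n \<Rightarrow> real) \<Rightarrow> real" where
  "prof_prob f v = (\<Prod>i\<in>UNIV. f i (v i))"

definition Rev :: "('n::finite \<Rightarrow> real set) \<Rightarrow> ('n \<Rightarrow> real \<Rightarrow> real) \<Rightarrow> (('n \<Rightarrow> real) \<Rightarrow> 'n \<Rightarrow> real) \<Rightarrow> real" where
  "Rev V f p = (\<Sum>v\<in>PiE UNIV V. prof_prob f v * (\<Sum>i\<in>UNIV. p v i))"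

definition SW :: "('n::finite \<Rightarrow> real set) \<Rightarrow> ('n \<Rightarrow> real \<Rightarrow> real) \<Rightarrow> (('n \<Rightarrow> real) \<Rightarrow> 'n \<Rightarrow> real) \<Rightarrow> real" where
  "SW V f a = (\<Sum>v\<in>PiE UNIV V. prof_prob f v * (\<Sum>i\<in>UNIV. a v i * v i))"

definition Obj :: "real \<Rightarrow> ('n::finite \<Rightarrow> real set) \<Rightarrow> ('n \<Rightarrow> real \<Rightarrow> real)
    \<Rightarrow> (('n \<Rightarrow> real) \<Rightarrow> 'n \<Rightarrow> real) \<Rightarrow> (('n \<Rightarrow> real) \<Rightarrow> 'n \<Rightarrow> real) \<Rightarrow> real" where
  "Obj \<alpha> V f a p = \<alpha> * Rev V f p + (1 - \<alpha>) * SW V f a"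

definition feasible :: "(real^'n) set \<Rightarrow> ('n::finite \<Rightarrow> real set) \<Rightarrow> (('n \<Rightarrow> real) \<Rightarrow> 'n \<Rightarrow> real) \<Rightarrow> bool" where
  "feasible A V a \<longleftrightarrow> (\<forall>v\<in>PiE UNIV V. (\<chi> i. a v i) \<in> A)"

definition integral_auction :: "('n::finite \<Rightarrow> real set) \<Rightarrow> (('n \<Rightarrow> real) \<Rightarrow> 'n \<Rightarrow> real) \<Rightarrow> bool" where
  "integral_auction V a \<longleftrightarrow> (\<forall>v\<in>PiE UNIV V. \<forall>i. a v i \<in> \<nat>)"

(* DSIC; the bid "empty" yields allocation and payment 0, i.e. utility 0 *)
definition DSIC :: "('n::finite \<Rightarrow> real set) \<Rightarrow> (('n \<Rightarrow> real) \<Rightarrow> 'n \<Rightarrow> real) \<Rightarrow> (('n \<Rightarrow> real) \<Rightarrow> 'n \<Rightarrow> real) \<Rightarrow> bool" where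
  "DSIC V a p \<longleftrightarrow> (\<forall>i. \<forall>v\<in>PiE UNIV V.
      0 \<le> a v i * v i - p v i \<and>
      (\<forall>b\<in>V i. a (v(i := b)) i * v i - p (v(i := b)) i \<le> a v i * v i - p v i))"

definition interim :: "('n::finite \<Rightarrow> real set) \<Rightarrow> ('n \<Rightarrow> real \<Rightarrow> real) \<Rightarrow> (('n \<Rightarrow> real) \<Rightarrow> 'n \<Rightarrow> real) \<Rightarrow> 'n \<Rightarrow> real \<Rightarrow> real" where
  "interim V f q i b = (\<Sum>w\<in>PiE (UNIV - {i}) V. (\<Prod>j\<in>UNIV - {i}. f j (w j)) * q (w(i := b)) i)"

definition BIC :: "('n::finite \<Rightarrow> real set) \<Rightarrow> ('n \<Rightarrow> real \<Rightarrow> real) \<Rightarrow> (('n \<Rightarrow> real) \<Rightarrow> 'n \<Rightarrow> real) \<Rightarrow> (('n \<Rightarrow> real) \<Rightarrow> 'n \<Rightarrow> real) \<Rightarrow> bool" where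
  "BIC V f a p \<longleftrightarrow> (\<forall>i. \<forall>x\<in>V i.
      0 \<le> interim V f a i x * x - interim V f p i x \<and>
      (\<forall>b\<in>V i. interim V f a i b * x - interim V f p i b \<le> interim V f a i x * x - interim V f p i x))"

definition pay_formula :: "('n \<Rightarrow> real set) \<Rightarrow> (('n \<Rightarrow> real) \<Rightarrow> 'n \<Rightarrow> real) \<Rightarrow> ('n \<Rightarrow> real) \<Rightarrow> 'n \<Rightarrow> real" where
  "pay_formula V a v i = (let k = vidx V i (v i) in
     v i * a v i - (\<Sum>l\<in>{1..<k}. (vval V i (l + 1) - vval V i l) * a (v(i := vval V i l)) i))"

(* Total dual integrality of the system G x <= b (m' rows, G j i the (j,i) entry):
   for every integral c for which min {psi^T b : psi >= 0, G^T psi = c} exists (is finite),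
   it is attained by an integral psi. *)
definition TDI :: "nat \<Rightarrow> (nat \<Rightarrow> 'n::finite \<Rightarrow> real) \<Rightarrow> (nat \<Rightarrow> real) \<Rightarrow> bool" where
  "TDI m' G b \<longleftrightarrow> (\<forall>c :: 'n \<Rightarrow> real. (\<forall>i. c i \<in> \<int>) \<longrightarrow>
     (let S = {\<psi> :: nat \<Rightarrow> real. (\<forall>j<m'. 0 \<le> \<psi> j) \<and> (\<forall>i. (\<Sum>j<m'. G j i * \<psi> j) = c i)};
          obj = (\<lambda>\<psi>. \<Sum>j<m'. \<psi> j * b j)
      in (\<exists>\<psi>\<in>S. \<forall>\<psi>'\<in>S. obj \<psi> \<le> obj \<psi>') \<longrightarrow>
         (\<exists>\<psi>\<in>S. (\<forall>j<m'. \<psi> j \<in> \<int>) \<and> (\<forall>\<psi>'\<in>S. obj \<psi> \<le> obj \<psi>'))))"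

end

theory Submission
  imports Defs
begin

text \<open>For a single bidder, Myerson's characterization turns incentive compatibility into
  monotonicity of the (interim) allocation with the payment determined by it; substituting this
  payment, the objective \<open>\<alpha> Rev + (1 - \<alpha>) SW\<close> becomes the expected generalized virtual surplus. Ironing
  with the convex envelope of the cumulative virtual surplus changes this by a term that is
  nonpositive for monotone allocations and vanishes for allocations constant on ironing intervals.
  Hence every BIC auction is bounded by the expected ironed virtual welfare, which the auction
  choosing a maximizer of \<open>\<Sum>i. \<phi>\<^sub>i x\<^sub>i\<close> over \<open>A\<close>, \<open>\<phi>\<^sub>i\<close> the ironed virtual values, attains
  pointwise; this auction is monotone in each bidder's own ironed value, hence DSIC with the
  payment formula. In the TDI case the maximizer
  can be chosen integral: an extreme point of the optimal face is determined by its tight rows,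
  and total dual integrality forces its coordinates to be integers.\<close>

lemma sum_triangle_swap:
  fixes g :: "nat \<Rightarrow> nat \<Rightarrow> 'a::comm_monoid_add"
  shows "(\<Sum>k=1..K. \<Sum>l\<in>{1..<k}. g k l) = (\<Sum>l\<in>{1..<K}. \<Sum>k\<in>{Suc l..K}. g k l)"
proof (induction K)
  case (Suc K)
  have "(\<Sum>l\<in>{1..<Suc K}. \<Sum>k\<in>{Suc l..Suc K}. g k l)
      = (\<Sum>l\<in>{1..<Suc K}. \<Sum>k\<in>{Suc l..K}. g k l) + (\<Sum>l\<in>{1..<Suc K}. g (Suc K) l)"
    by (simp add: sum.distrib)
  also have "(\<Sum>l\<in>{1..<Suc K}. \<Sum>k\<in>{Suc l..K}. g k l) = (\<Sum>l\<in>{1..<K}. \<Sum>k\<in>{Suc l..K}. g k l)"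
    by (cases "K = 0") (auto simp: sum.atLeastLessThan_Suc)
  finally show ?case using Suc by simp
qed simp

lemma sum_by_parts_atLeast1:
  fixes D a :: "nat \<Rightarrow> real"
  assumes "1 \<le> K"
  shows "(\<Sum>k=1..K. (D k - D (k - 1)) * a k)
       = D K * a K - D 0 * a 1 + (\<Sum>k\<in>{1..<K}. D k * (a k - a (Suc k)))"
  using assms by (induction K rule: nat_induct_at_least) (simp_all add: sum.atLeastLessThan_Suc algebra_simps)

lemma sum_increments_weighted_bounds:
  fixes a w :: "nat \<Rightarrow> real"
  assumes "j \<le> k"
    and a_mono: "\<And>l l'. j \<le> l \<Longrightarrow> l \<le> l' \<Longrightarrow> l' \<le> k \<Longrightarrow> a l \<le> a l'"
    and w_mono: "\<And>l. j \<le> l \<Longrightarrow> l < k \<Longrightarrow> w l \<le> w (Suc l)"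
  shows "a j * (w k - w j) \<le> (\<Sum>l\<in>{j..<k}. (w (Suc l) - w l) * a l)"
    and "(\<Sum>l\<in>{j..<k}. (w (Suc l) - w l) * a l) \<le> a k * (w k - w j)"
proof -
  have telescope: "a' * (w k - w j) = (\<Sum>l\<in>{j..<k}. (w (Suc l) - w l) * a')" for a'
    using sum_Suc_diff'[OF assms(1), of w] by (simp add: sum_distrib_left[symmetric] mult.commute)
  show "a j * (w k - w j) \<le> (\<Sum>l\<in>{j..<k}. (w (Suc l) - w l) * a l)"
    unfolding telescope by (intro sum_mono mult_left_mono) (auto intro: a_mono w_mono)
  show "(\<Sum>l\<in>{j..<k}. (w (Suc l) - w l) * a l) \<le> a k * (w k - w j)"
    unfolding telescope by (intro sum_mono mult_left_mono) (auto intro: a_mono w_mono)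
qed

section \<open>Myerson's characterization for one bidder\<close>

definition myerson_payment :: "(nat \<Rightarrow> real) \<Rightarrow> (nat \<Rightarrow> real) \<Rightarrow> nat \<Rightarrow> real" where
  "myerson_payment w a k = w k * a k - (\<Sum>l\<in>{1..<k}. (w (Suc l) - w l) * a l)"

lemma myerson_payment_individually_rational:
  fixes w a :: "nat \<Rightarrow> real"
  assumes "\<And>l. 1 \<le> l \<Longrightarrow> l < k \<Longrightarrow> w l \<le> w (Suc l)" and "\<And>l. 1 \<le> l \<Longrightarrow> l < k \<Longrightarrow> 0 \<le> a l"
  shows "0 \<le> w k * a k - myerson_payment w a k"
  unfolding myerson_payment_def using assms by (auto intro!: sum_nonneg mult_nonneg_nonneg)

lemma myerson_payment_incentive_compatible:
  fixes w a :: "nat \<Rightarrow> real"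
  assumes w_mono: "\<And>l. 1 \<le> l \<Longrightarrow> l < K \<Longrightarrow> w l \<le> w (Suc l)"
    and a_mono: "\<And>l l'. 1 \<le> l \<Longrightarrow> l \<le> l' \<Longrightarrow> l' \<le> K \<Longrightarrow> a l \<le> a l'"
    and j: "1 \<le> j" "j \<le> K" and k: "1 \<le> k" "k \<le> K"
  shows "w k * a j - myerson_payment w a j \<le> w k * a k - myerson_payment w a k"
proof -
  have utility: "w k * a k - myerson_payment w a k = (\<Sum>l\<in>{1..<k}. (w (Suc l) - w l) * a l)"
    by (simp add: myerson_payment_def)
  have deviation: "w k * a j - myerson_payment w a j
      = a j * (w k - w j) + (\<Sum>l\<in>{1..<j}. (w (Suc l) - w l) * a l)"
    by (simp add: myerson_payment_def algebra_simps)
  show ?thesis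
    unfolding deviation utility
  proof (cases "j \<le> k")
    case True
    have "a j * (w k - w j) \<le> (\<Sum>l\<in>{j..<k}. (w (Suc l) - w l) * a l)"
      by (rule sum_increments_weighted_bounds(1)) (use True j k in \<open>auto intro: a_mono w_mono\<close>)
    then show "a j * (w k - w j) + (\<Sum>l\<in>{1..<j}. (w (Suc l) - w l) * a l)
        \<le> (\<Sum>l\<in>{1..<k}. (w (Suc l) - w l) * a l)"
      using True j sum.atLeastLessThan_concat[of 1 j k "\<lambda>l. (w (Suc l) - w l) * a l"] by simp
  next
    case False
    have "(\<Sum>l\<in>{k..<j}. (w (Suc l) - w l) * a l) \<le> a j * (w j - w k)"
      by (rule sum_increments_weighted_bounds(2)) (use False j k in \<open>auto intro: a_mono w_mono\<close>)
    then show "a j * (w k - w j) + (\<Sum>l\<in>{1..<j}. (w (Suc l) - w l) * a l)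
        \<le> (\<Sum>l\<in>{1..<k}. (w (Suc l) - w l) * a l)"
      using False k sum.atLeastLessThan_concat[of 1 k j "\<lambda>l. (w (Suc l) - w l) * a l"]
      by (simp add: algebra_simps)
  qed
qed

lemma incentive_compatible_allocation_mono:
  fixes x y Ax Ay Px Py :: real
  assumes "x < y" "y * Ax - Px \<le> y * Ay - Py" "x * Ay - Py \<le> x * Ax - Px"
  shows "Ax \<le> Ay"
proof -
  have "0 \<le> (y - x) * (Ay - Ax)" using assms(2,3) by (simp add: algebra_simps)
  then show ?thesis using assms(1) by (simp add: zero_le_mult_iff)
qed

lemma incentive_compatible_payment_le_myerson:
  fixes w A P :: "nat \<Rightarrow> real"
  assumes IR: "0 \<le> w 1 * A 1 - P 1"
    and IC: "\<And>k. 1 \<le> k \<Longrightarrow> k < K \<Longrightarrow> w (Suc k) * A k - P k \<le> w (Suc k) * A (Suc k) - P (Suc k)"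
    and k: "1 \<le> k" "k \<le> K"
  shows "P k \<le> myerson_payment w A k"
  using k
proof (induction k rule: nat_induct_at_least)
  case base
  then show ?case using IR by (simp add: myerson_payment_def)
next
  case (Suc k)
  then show ?case
    using IC[of k] by (simp add: myerson_payment_def sum.atLeastLessThan_Suc algebra_simps)
qed

section \<open>Ironing\<close>

definition cum_prob :: "(nat \<Rightarrow> real) \<Rightarrow> nat \<Rightarrow> real" where
  "cum_prob q k = (\<Sum>j=1..k. q j)"

definition virtual_value :: "nat \<Rightarrow> (nat \<Rightarrow> real) \<Rightarrow> (nat \<Rightarrow> real) \<Rightarrow> real \<Rightarrow> nat \<Rightarrow> real" where
  "virtual_value K w q \<alpha> k =
     w k - \<alpha> * (if k < K then (w (Suc k) - w k) * (1 - cum_prob q k) / q k else 0)"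

definition cum_virtual_surplus :: "nat \<Rightarrow> (nat \<Rightarrow> real) \<Rightarrow> (nat \<Rightarrow> real) \<Rightarrow> real \<Rightarrow> nat \<Rightarrow> real" where
  "cum_virtual_surplus K w q \<alpha> k = (\<Sum>j=1..k. virtual_value K w q \<alpha> j * q j)"

text \<open>A single bidder whose \<open>k\<close>-th value \<open>w k\<close> has probability \<open>q k\<close>. The sequence \<open>h\<close> will be
  the lower convex envelope of the cumulative virtual surplus, sampled at the breakpoints \<open>F k\<close>.\<close>

locale ironing =
  fixes K :: nat and w q h :: "nat \<Rightarrow> real" and \<alpha> :: real
  assumes K_pos: "1 \<le> K"
    and q_pos: "\<And>k. 1 \<le> k \<Longrightarrow> k \<le> K \<Longrightarrow> 0 < q k"
    and cum_prob_K: "cum_prob q K = 1"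
    and h_0: "h 0 = 0"
    and h_K: "h K = cum_virtual_surplus K w q \<alpha> K"
    and h_le: "\<And>k. k \<le> K \<Longrightarrow> h k \<le> cum_virtual_surplus K w q \<alpha> k"
begin

abbreviation "F \<equiv> cum_prob q"
abbreviation "\<phi> \<equiv> virtual_value K w q \<alpha>"
abbreviation "S \<equiv> cum_virtual_surplus K w q \<alpha>"

definition ironed_vv :: "nat \<Rightarrow> real" where
  "ironed_vv k = (h k - h (k - 1)) / q k"

lemma one_minus_cum_prob: "l \<le> K \<Longrightarrow> 1 - F l = (\<Sum>k\<in>{Suc l..K}. q k)"
  using cum_prob_K sum.ub_add_nat[of 1 l q "K - l"] by (simp add: cum_prob_def)

lemma expected_myerson_payment:
  "(\<Sum>k=1..K. q k * myerson_payment w a k)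
     = (\<Sum>k=1..K. q k * w k * a k) - (\<Sum>l\<in>{1..<K}. (w (Suc l) - w l) * (1 - F l) * a l)"
proof -
  have "(\<Sum>k=1..K. q k * (\<Sum>l\<in>{1..<k}. (w (Suc l) - w l) * a l))
      = (\<Sum>l\<in>{1..<K}. \<Sum>k\<in>{Suc l..K}. q k * ((w (Suc l) - w l) * a l))"
    unfolding sum_distrib_left by (rule sum_triangle_swap)
  also have "\<dots> = (\<Sum>l\<in>{1..<K}. (w (Suc l) - w l) * (1 - F l) * a l)"
    by (intro sum.cong refl) (simp add: one_minus_cum_prob sum_distrib_left sum_distrib_right mult_ac)
  finally show ?thesis
    by (simp add: myerson_payment_def right_diff_distrib sum_subtractf mult.assoc)
qed

lemma expected_virtual_surplus:
  "\<alpha> * (\<Sum>k=1..K. q k * myerson_payment w a k) + (1 - \<alpha>) * (\<Sum>k=1..K. q k * w k * a k)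
     = (\<Sum>k=1..K. q k * \<phi> k * a k)"
proof -
  have "q k * \<phi> k * a k = q k * w k * a k
      - \<alpha> * (if k < K then (w (Suc k) - w k) * (1 - F k) * a k else 0)" if "k \<in> {1..K}" for k
    using q_pos[of k] that by (auto simp: virtual_value_def field_simps)
  then have "(\<Sum>k=1..K. q k * \<phi> k * a k) = (\<Sum>k=1..K. q k * w k * a k)
      - \<alpha> * (\<Sum>k=1..K. if k < K then (w (Suc k) - w k) * (1 - F k) * a k else 0)"
    by (simp add: sum_subtractf sum_distrib_left)
  also have "(\<Sum>k=1..K. if k < K then (w (Suc k) - w k) * (1 - F k) * a k else 0)
      = (\<Sum>l\<in>{1..<K}. (w (Suc l) - w l) * (1 - F l) * a l)"
    using K_pos by (intro sum.mono_neutral_cong_right) auto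
  finally have "(\<Sum>k=1..K. q k * \<phi> k * a k) = (\<Sum>k=1..K. q k * w k * a k)
      - \<alpha> * (\<Sum>l\<in>{1..<K}. (w (Suc l) - w l) * (1 - F l) * a l)" .
  moreover have "\<alpha> * (X - Y) + (1 - \<alpha>) * X = X - \<alpha> * Y" for X Y :: real
    by (simp add: algebra_simps)
  ultimately show ?thesis unfolding expected_myerson_payment by simp
qed

text \<open>The correction term vanishes for allocations that are constant wherever \<open>h\<close> lies strictly
  below \<open>S\<close>, and is nonpositive for monotone allocations.\<close>

lemma ironing_identity:
  "(\<Sum>k=1..K. q k * \<phi> k * a k)
     = (\<Sum>k=1..K. q k * ironed_vv k * a k) + (\<Sum>k\<in>{1..<K}. (S k - h k) * (a k - a (Suc k)))"
proof -
  define D where "D k = S k - h k" for k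
  have "q k * \<phi> k * a k - q k * ironed_vv k * a k = (D k - D (k - 1)) * a k" if "k \<in> {1..K}" for k
  proof -
    have "S k - S (k - 1) = \<phi> k * q k" using that by (cases k) (auto simp: cum_virtual_surplus_def)
    then show ?thesis using q_pos[of k] that by (simp add: ironed_vv_def D_def field_simps)
  qed
  then have "(\<Sum>k=1..K. q k * \<phi> k * a k) - (\<Sum>k=1..K. q k * ironed_vv k * a k)
      = (\<Sum>k=1..K. (D k - D (k - 1)) * a k)"
    by (simp add: sum_subtractf[symmetric])
  also have "\<dots> = (\<Sum>k\<in>{1..<K}. D k * (a k - a (Suc k)))"
    using sum_by_parts_atLeast1[OF K_pos, of D a] by (simp add: D_def h_K h_0 cum_virtual_surplus_def)
  finally show ?thesis by (simp add: D_def)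
qed

lemma objective_eq_ironed_surplus:
  assumes "\<And>k. 1 \<le> k \<Longrightarrow> k < K \<Longrightarrow> h k < S k \<Longrightarrow> a k = a (Suc k)"
  shows "\<alpha> * (\<Sum>k=1..K. q k * myerson_payment w a k) + (1 - \<alpha>) * (\<Sum>k=1..K. q k * w k * a k)
      = (\<Sum>k=1..K. q k * ironed_vv k * a k)"
proof -
  have "(\<Sum>k\<in>{1..<K}. (S k - h k) * (a k - a (Suc k))) = 0"
  proof (rule sum.neutral, rule ballI)
    fix k assume "k \<in> {1..<K}"
    then show "(S k - h k) * (a k - a (Suc k)) = 0"
      using assms[of k] h_le[of k] by (cases "h k < S k") auto
  qed
  then show ?thesis unfolding expected_virtual_surplus ironing_identity by simp
qed

lemma objective_le_ironed_surplus:
  assumes "0 \<le> \<alpha>"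
    and A_mono: "\<And>k. 1 \<le> k \<Longrightarrow> k < K \<Longrightarrow> A k \<le> A (Suc k)"
    and P_le: "\<And>k. 1 \<le> k \<Longrightarrow> k \<le> K \<Longrightarrow> P k \<le> myerson_payment w A k"
  shows "\<alpha> * (\<Sum>k=1..K. q k * P k) + (1 - \<alpha>) * (\<Sum>k=1..K. q k * w k * A k)
      \<le> (\<Sum>k=1..K. q k * ironed_vv k * A k)"
proof -
  have "\<alpha> * (\<Sum>k=1..K. q k * P k) \<le> \<alpha> * (\<Sum>k=1..K. q k * myerson_payment w A k)"
    using assms(1) P_le q_pos by (intro mult_left_mono sum_mono) (auto intro: less_imp_le)
  moreover have "(\<Sum>k\<in>{1..<K}. (S k - h k) * (A k - A (Suc k))) \<le> 0"
    using h_le A_mono by (intro sum_nonpos mult_nonneg_nonpos) auto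
  then have "(\<Sum>k=1..K. q k * \<phi> k * A k) \<le> (\<Sum>k=1..K. q k * ironed_vv k * A k)"
    unfolding ironing_identity by simp
  ultimately show ?thesis using expected_virtual_surplus[of A] by linarith
qed

end

lemma convex_on_max:
  fixes g1 g2 :: "'a::real_vector \<Rightarrow> real"
  assumes "convex_on I g1" "convex_on I g2"
  shows "convex_on I (\<lambda>x. max (g1 x) (g2 x))"
proof (rule convex_onI)
  show "convex I" using assms(1) by (rule convex_on_imp_convex)
  fix t :: real and x y assume t: "0 < t" "t < 1" and xy: "x \<in> I" "y \<in> I"
  have "g1 ((1 - t) *\<^sub>R x + t *\<^sub>R y) \<le> (1 - t) * g1 x + t * g1 y"
    and "g2 ((1 - t) *\<^sub>R x + t *\<^sub>R y) \<le> (1 - t) * g2 x + t * g2 y"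
    using convex_onD[OF assms(1)] convex_onD[OF assms(2)] t xy by simp_all
  moreover have "(1 - t) * g1 x + t * g1 y \<le> (1 - t) * max (g1 x) (g2 x) + t * max (g1 y) (g2 y)"
    and "(1 - t) * g2 x + t * g2 y \<le> (1 - t) * max (g1 x) (g2 x) + t * max (g1 y) (g2 y)"
    using t by (intro add_mono mult_left_mono; simp)+
  ultimately show "max (g1 ((1 - t) *\<^sub>R x + t *\<^sub>R y)) (g2 ((1 - t) *\<^sub>R x + t *\<^sub>R y))
      \<le> (1 - t) * max (g1 x) (g2 x) + t * max (g1 y) (g2 y)" by linarith
qed

lemma convex_on_affine_real: "convex I \<Longrightarrow> convex_on I (\<lambda>t::real. c + m * t)"
  by (rule convex_onI) (auto simp: algebra_simps)

lemma convex_on_slopes_le: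
  fixes g :: "real \<Rightarrow> real"
  assumes g: "convex_on I g" and I: "a \<in> I" "c \<in> I" and abc: "a < b" "b < c"
  shows "(g b - g a) * (c - b) \<le> (g c - g b) * (b - a)"
proof -
  define t where "t = (b - a) / (c - a)"
  have t: "0 \<le> t" "t \<le> 1" "t * (c - a) = b - a" using abc by (auto simp: t_def)
  then have "(1 - t) *\<^sub>R a + t *\<^sub>R c = b" by (simp add: algebra_simps)
  then have "g b \<le> (1 - t) * g a + t * g c" using convex_onD[OF g t(1,2) I] by simp
  then have "(c - a) * g b \<le> (c - a) * ((1 - t) * g a + t * g c)"
    using abc by (intro mult_left_mono) auto
  also have "\<dots> = ((c - a) * (1 - t)) * g a + ((c - a) * t) * g c" by (simp add: algebra_simps)
  also have "(c - a) * (1 - t) = c - b" using t(3) by (simp add: algebra_simps)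
  also have "(c - a) * t = b - a" using t(3) by (simp add: algebra_simps)
  finally show ?thesis by (simp add: algebra_simps)
qed

lemma convex_on_above_chord_line:
  fixes g :: "real \<Rightarrow> real"
  assumes g: "convex_on I g" and I: "a \<in> I" "b \<in> I" "t \<in> I" and "a < b"
    and slope: "g b - g a = s * (b - a)" and outside: "t \<le> a \<or> b \<le> t"
  shows "g a + s * (t - a) \<le> g t"
proof (cases "t < a \<or> b < t")
  case True
  then show ?thesis
  proof
    assume "t < a"
    have "(g a - g t) * (b - a) \<le> (g b - g a) * (a - t)"
      by (rule convex_on_slopes_le[OF g I(3,2) \<open>t < a\<close> \<open>a < b\<close>])
    also have "\<dots> = (s * (a - t)) * (b - a)" by (simp add: slope)
    finally have "g a - g t \<le> s * (a - t)" using \<open>a < b\<close> by (simp add: mult_le_cancel_right)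
    then show ?thesis by (simp add: algebra_simps)
  next
    assume "b < t"
    have "(s * (t - b)) * (b - a) = (g b - g a) * (t - b)" by (simp add: slope)
    also have "\<dots> \<le> (g t - g b) * (b - a)"
      by (rule convex_on_slopes_le[OF g I(1,3) \<open>a < b\<close> \<open>b < t\<close>])
    finally have "s * (t - b) \<le> g t - g b" using \<open>a < b\<close> by (simp add: mult_le_cancel_right)
    then show ?thesis using slope by (simp add: algebra_simps)
  qed
qed (use outside slope in \<open>auto simp: algebra_simps\<close>)

locale bidder =
  fixes V :: "'n \<Rightarrow> real set" and f :: "'n \<Rightarrow> real \<Rightarrow> real" and i :: 'n and \<alpha> :: real
  assumes finite_values: "finite (V i)" and values_nonempty: "V i \<noteq> {}"
    and pmf_pos: "\<And>x. x \<in> V i \<Longrightarrow> 0 < f i x" and pmf_sum: "(\<Sum>x\<in>V i. f i x) = 1"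
begin

abbreviation "K \<equiv> card (V i)"
abbreviation "w \<equiv> vval V i"
abbreviation "q \<equiv> \<lambda>k. f i (vval V i k)"
abbreviation "F \<equiv> cum_prob q"
abbreviation "S \<equiv> cum_virtual_surplus K w q \<alpha>"

lemma K_pos: "1 \<le> K"
  using finite_values values_nonempty by (simp add: Suc_le_eq card_gt_0_iff)

lemma vval_eq_nth: "w k = sorted_list_of_set (V i) ! (k - 1)"
  by (simp add: vval_def)

lemma vval_mem: "1 \<le> k \<Longrightarrow> k \<le> K \<Longrightarrow> w k \<in> V i"
  using finite_values nth_mem[of "k - 1" "sorted_list_of_set (V i)"] by (simp add: vval_eq_nth)

lemma vval_strict_mono: "1 \<le> j \<Longrightarrow> j < k \<Longrightarrow> k \<le> K \<Longrightarrow> w j < w k"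
  using finite_values sorted_wrt_nth_less[of "(<)" "sorted_list_of_set (V i)" "j - 1" "k - 1"]
  by (simp add: vval_eq_nth sorted_list_of_set.strict_sorted_key_list_of_set)

lemma vval_mono: "1 \<le> j \<Longrightarrow> j \<le> k \<Longrightarrow> k \<le> K \<Longrightarrow> w j \<le> w k"
  using vval_strict_mono[of j k] by (cases "j = k") auto

lemma inj_on_vval: "inj_on w {1..K}"
proof (rule inj_onI)
  fix j k assume "j \<in> {1..K}" "k \<in> {1..K}" "w j = w k"
  then show "j = k"
    using vval_strict_mono[of j k] vval_strict_mono[of k j] by (cases j k rule: linorder_cases) auto
qed

lemma bij_betw_vval: "bij_betw w {1..K} (V i)"
proof (rule bij_betw_imageI[OF inj_on_vval])
  show "w ` {1..K} = V i"
  proof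
    show "w ` {1..K} \<subseteq> V i" using vval_mem by auto
    show "V i \<subseteq> w ` {1..K}"
    proof
      fix x assume "x \<in> V i"
      then obtain j where "j < K" "sorted_list_of_set (V i) ! j = x"
        using finite_values in_set_conv_nth[of x "sorted_list_of_set (V i)"] by auto
      then show "x \<in> w ` {1..K}" by (intro image_eqI[of _ _ "Suc j"]) (auto simp: vval_eq_nth)
    qed
  qed
qed

lemma vidx_vval: "1 \<le> k \<Longrightarrow> k \<le> K \<Longrightarrow> vidx V i (w k) = k"
  unfolding vidx_def by (rule the_equality) (auto dest: inj_onD[OF inj_on_vval])

lemma vidx_mem: assumes "x \<in> V i" shows "vidx V i x \<in> {1..K}" "w (vidx V i x) = x"
proof -
  obtain k where "k \<in> {1..K}" "w k = x" using assms bij_betw_vval unfolding bij_betw_def by force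
  then show "vidx V i x \<in> {1..K}" "w (vidx V i x) = x" using vidx_vval by auto
qed

lemma sum_values: "(\<Sum>x\<in>V i. g x) = (\<Sum>k=1..K. g (w k))"
  using sum.reindex_bij_betw[OF bij_betw_vval, of g] by simp

lemma q_pos: "1 \<le> k \<Longrightarrow> k \<le> K \<Longrightarrow> 0 < q k"
  using pmf_pos vval_mem by auto

lemma cdf_vval: assumes "1 \<le> k" "k \<le> K" shows "cdf V f i (w k) = F k"
proof -
  have "{x\<in>V i. x \<le> w k} = w ` {1..k}"
  proof
    show "w ` {1..k} \<subseteq> {x\<in>V i. x \<le> w k}" using assms vval_mem vval_mono by auto
    show "{x\<in>V i. x \<le> w k} \<subseteq> w ` {1..k}"
    proof
      fix x assume x: "x \<in> {x\<in>V i. x \<le> w k}"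
      then obtain j where j: "j \<in> {1..K}" "w j = x" using bij_betw_vval by (force simp: bij_betw_def)
      have "j \<le> k" using x j vval_strict_mono[of k j] assms by (cases "k < j") auto
      then show "x \<in> w ` {1..k}" using j by auto
    qed
  qed
  moreover have "inj_on w {1..k}"
    using inj_on_vval assms by (auto intro: inj_on_subset)
  ultimately show ?thesis by (simp add: cdf_def cum_prob_def sum.reindex)
qed

lemma cum_prob_K: "F K = 1"
  using pmf_sum sum_values[of "f i"] by (simp add: cum_prob_def)

lemma Fpt_eq: "k \<le> K \<Longrightarrow> Fpt V f i k = F k"
  by (cases "k = 0") (auto simp: Fpt_def cum_prob_def cdf_vval)

lemma gvv_vval: "1 \<le> k \<Longrightarrow> k \<le> K \<Longrightarrow> gvv \<alpha> V f i (w k) = virtual_value K w q \<alpha> k"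
  by (simp add: gvv_def virtual_value_def vidx_vval cdf_vval)

lemma Spt_eq: "k \<le> K \<Longrightarrow> Spt \<alpha> V f i k = S k"
  unfolding Spt_def cum_virtual_surplus_def by (intro sum.cong refl) (simp add: gvv_vval)

lemma cum_prob_0: "F 0 = 0" and cum_virtual_surplus_0: "S 0 = 0"
  by (simp_all add: cum_prob_def cum_virtual_surplus_def)

lemma cum_prob_diff: "1 \<le> k \<Longrightarrow> F k - F (k - 1) = q k"
  by (cases k) (auto simp: cum_prob_def)

lemma cum_prob_strict_mono: "j < k \<Longrightarrow> k \<le> K \<Longrightarrow> F j < F k"
proof (induction k)
  case (Suc k)
  then show ?case using q_pos[of "Suc k"] by (cases "j = k") (auto simp: cum_prob_def)
qed simp

lemma cum_prob_mono: "j \<le> k \<Longrightarrow> k \<le> K \<Longrightarrow> F j \<le> F k"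
  using cum_prob_strict_mono[of j k] by (cases "j = k") auto

lemma cum_prob_bounds: "k \<le> K \<Longrightarrow> 0 \<le> F k \<and> F k \<le> 1"
  using cum_prob_mono[of 0 k] cum_prob_mono[of k K] cum_prob_K by (simp add: cum_prob_0)

abbreviation "Si \<equiv> Sinterp \<alpha> V f i"

lemma Sinterp_on_segment:
  assumes k: "1 \<le> k" "k \<le> K" and t: "F (k - 1) \<le> t" "t \<le> F k"
  shows "Si t = S (k - 1) + (t - F (k - 1)) / (F k - F (k - 1)) * (S k - S (k - 1))"
proof -
  define P where "P k \<longleftrightarrow> 1 \<le> k \<and> k \<le> K \<and> Fpt V f i (k - 1) \<le> t \<and> t \<le> Fpt V f i k" for k
  have "P k" using k t by (simp add: P_def Fpt_eq)
  define k' where "k' = (LEAST k. P k)"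
  have "P k'" "k' \<le> k" using LeastI[of P k] Least_le[of P k] \<open>P k\<close> by (simp_all add: k'_def)
  then have k': "1 \<le> k'" "k' \<le> K" and t': "F (k' - 1) \<le> t" "t \<le> F k'"
    by (auto simp: P_def Fpt_eq)
  have "\<exists>k\<in>{1..K}. Fpt V f i (k - 1) \<le> t \<and> t \<le> Fpt V f i k" using \<open>P k\<close> by (auto simp: P_def)
  then have "Si t = Spt \<alpha> V f i (k' - 1) + (t - Fpt V f i (k' - 1)) / (Fpt V f i k' - Fpt V f i (k' - 1))
        * (Spt \<alpha> V f i k' - Spt \<alpha> V f i (k' - 1))"
    unfolding Sinterp_def by (simp add: k'_def P_def Let_def)
  then have Si_t: "Si t = S (k' - 1) + (t - F (k' - 1)) / (F k' - F (k' - 1)) * (S k' - S (k' - 1))"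
    using k' by (simp add: Fpt_eq Spt_eq)
  show ?thesis
  proof (cases "k' = k")
    case False
    \<comment> \<open>\<open>t\<close> is then the breakpoint shared by segments \<open>k - 1\<close> and \<open>k\<close>\<close>
    have "k' = k - 1"
      using cum_prob_strict_mono[of k' "k - 1"] \<open>k' \<le> k\<close> False k t t' by linarith
    moreover have "F k' - F (k' - 1) \<noteq> 0" using cum_prob_diff[of k'] q_pos[of k'] k' by simp
    ultimately show ?thesis using Si_t t t' by simp
  qed (use Si_t in simp)
qed

lemma Sinterp_at_breakpoint: assumes "k \<le> K" shows "Si (F k) = S k"
proof (cases "k = 0")
  case True
  then show ?thesis
    using Sinterp_on_segment[of 1 "F 0"] K_pos cum_prob_mono[of 0 1] by (simp add: cum_prob_0 cum_virtual_surplus_0)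
next
  case False
  have "F k - F (k - 1) \<noteq> 0" using cum_prob_diff[of k] q_pos[of k] False assms by simp
  then show ?thesis using Sinterp_on_segment[of k "F k"] False assms cum_prob_mono[of "k - 1" k] by simp
qed

lemma affine_le_Sinterp_on_segment:
  assumes k: "1 \<le> k" "k \<le> K" and t: "F (k - 1) \<le> t" "t \<le> F k"
    and left: "c + m * F (k - 1) \<le> S (k - 1)" and right: "c + m * F k \<le> S k"
  shows "c + m * t \<le> Si t"
proof -
  define u where "u = (t - F (k - 1)) / (F k - F (k - 1))"
  have gap: "F (k - 1) < F k" using cum_prob_strict_mono[of "k - 1" k] k by simp
  then have u: "0 \<le> u" "u \<le> 1" "u * (F k - F (k - 1)) = t - F (k - 1)"
    using t by (auto simp: u_def divide_le_eq_1)
  have "Si t = S (k - 1) + u * (S k - S (k - 1))"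
    using Sinterp_on_segment[OF k t] by (simp add: u_def)
  also have "\<dots> = (1 - u) * S (k - 1) + u * S k" by (simp add: algebra_simps)
  finally have Si_t: "Si t = (1 - u) * S (k - 1) + u * S k" .
  have t_eq: "t = (1 - u) * F (k - 1) + u * F k" using u(3) by (simp add: algebra_simps)
  have "c + m * t = (1 - u) * (c + m * F (k - 1)) + u * (c + m * F k)"
    by (subst t_eq) (simp add: algebra_simps)
  then show ?thesis
    unfolding Si_t using left right u(1,2) by (simp add: add_mono mult_left_mono)
qed

lemma breakpoint_segment_exists:
  assumes "0 \<le> t" "t \<le> 1"
  shows "\<exists>k. 1 \<le> k \<and> k \<le> K \<and> F (k - 1) \<le> t \<and> t \<le> F k"
proof (cases "t = 0")
  case True
  have "F 0 \<le> F 1" by (rule cum_prob_mono) (use K_pos in auto)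
  then show ?thesis using True K_pos by (intro exI[of _ 1]) (simp add: cum_prob_0)
next
  case False
  define P where "P k \<longleftrightarrow> t \<le> F k" for k
  have "P K" using assms cum_prob_K by (simp add: P_def)
  define k where "k = (LEAST k. P k)"
  have "P k" "k \<le> K" using LeastI[of P K] Least_le[of P K] \<open>P K\<close> by (simp_all add: k_def)
  moreover have "k \<noteq> 0"
  proof
    assume "k = 0"
    with \<open>P k\<close> have "t \<le> 0" by (simp add: P_def cum_prob_0)
    with assms False show False by simp
  qed
  moreover have "\<not> P (k - 1)" using not_less_Least[of "k - 1" P] \<open>k \<noteq> 0\<close> by (simp add: k_def)
  ultimately show ?thesis unfolding P_def by (intro exI[of _ k]) simp
qed

lemma affine_le_Sinterp:
  assumes "\<And>k. k \<le> K \<Longrightarrow> c + m * F k \<le> S k" and "0 \<le> t" "t \<le> 1"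
  shows "c + m * t \<le> Si t"
proof -
  obtain k where k: "1 \<le> k" "k \<le> K" "F (k - 1) \<le> t" "t \<le> F k"
    using breakpoint_segment_exists[OF assms(2,3)] by blast
  show ?thesis by (rule affine_le_Sinterp_on_segment[OF k]) (use assms(1) k in auto)
qed

definition convex_minorants :: "(real \<Rightarrow> real) set" where
  "convex_minorants = {h. convex_on {0..1} h \<and> (\<forall>s\<in>{0..1}. h s \<le> Si s)}"

abbreviation "H \<equiv> Hconv \<alpha> V f i"

lemma Hconv_eq_SUP: "H t = (SUP h\<in>convex_minorants. h t)"
  by (simp add: Hconv_def convex_minorants_def)

lemma le_Hconv: "h \<in> convex_minorants \<Longrightarrow> t \<in> {0..1} \<Longrightarrow> h t \<le> H t"
  unfolding Hconv_eq_SUP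
  by (rule cSUP_upper, assumption, rule bdd_aboveI[of _ "Si t"]) (auto simp: convex_minorants_def)

lemma affine_in_convex_minorants:
  "(\<And>k. k \<le> K \<Longrightarrow> c + m * F k \<le> S k) \<Longrightarrow> (\<lambda>t. c + m * t) \<in> convex_minorants"
  unfolding convex_minorants_def using convex_on_affine_real affine_le_Sinterp by auto

lemma linear_convex_minorant: "(\<lambda>t. 0 + - ((\<Sum>k=1..K. \<bar>S k\<bar>) / q 1) * t) \<in> convex_minorants"
proof (rule affine_in_convex_minorants)
  fix k assume k: "k \<le> K"
  show "0 + - ((\<Sum>k=1..K. \<bar>S k\<bar>) / q 1) * F k \<le> S k"
  proof (cases "k = 0")
    case False
    have q1: "0 < q 1" using q_pos K_pos by simp
    have "q 1 \<le> F k" using cum_prob_mono[of 1 k] k False by (simp add: cum_prob_def)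
    then have "(\<Sum>k=1..K. \<bar>S k\<bar>) \<le> (\<Sum>k=1..K. \<bar>S k\<bar>) / q 1 * F k"
      using q1 by (simp add: field_simps mult_right_mono sum_nonneg)
    moreover have "\<bar>S k\<bar> \<le> (\<Sum>k=1..K. \<bar>S k\<bar>)" using k False by (intro member_le_sum) auto
    ultimately show ?thesis by linarith
  qed (simp add: cum_prob_0 cum_virtual_surplus_0)
qed

lemma convex_minorants_nonempty: "convex_minorants \<noteq> {}"
  using linear_convex_minorant by auto

lemma Hconv_le_Sinterp: "t \<in> {0..1} \<Longrightarrow> H t \<le> Si t"
  unfolding Hconv_eq_SUP
  by (rule cSUP_least[OF convex_minorants_nonempty]) (auto simp: convex_minorants_def)

lemma convex_on_Hconv: "convex_on {0..1} H"
proof (rule convex_onI)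
  fix t x y :: real assume t: "0 < t" "t < 1" and xy: "x \<in> {0..1}" "y \<in> {0..1}"
  show "H ((1 - t) *\<^sub>R x + t *\<^sub>R y) \<le> (1 - t) * H x + t * H y"
    unfolding Hconv_eq_SUP[of "(1 - t) *\<^sub>R x + t *\<^sub>R y"]
  proof (rule cSUP_least[OF convex_minorants_nonempty])
    fix h assume h: "h \<in> convex_minorants"
    have "h ((1 - t) *\<^sub>R x + t *\<^sub>R y) \<le> (1 - t) * h x + t * h y"
      using h t xy by (intro convex_onD) (auto simp: convex_minorants_def)
    also have "\<dots> \<le> (1 - t) * H x + t * H y"
      using le_Hconv[OF h] xy t by (intro add_mono mult_left_mono) auto
    finally show "h ((1 - t) *\<^sub>R x + t *\<^sub>R y) \<le> (1 - t) * H x + t * H y" .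
  qed
qed simp

lemma Hconv_0: "H 0 = 0"
proof -
  have "H 0 \<le> 0"
    using Hconv_le_Sinterp[of 0] Sinterp_at_breakpoint[of 0] by (simp add: cum_prob_0 cum_virtual_surplus_0)
  moreover have "0 \<le> H 0" using le_Hconv[OF linear_convex_minorant, of 0] by simp
  ultimately show ?thesis by simp
qed

lemma Hconv_1: "H 1 = S K"
proof -
  define M where "M = (\<Sum>k=0..K. \<bar>S K - S k\<bar>) / q K"
  have qK: "0 < q K" using q_pos K_pos by simp
  have "(\<lambda>t. (S K - M) + M * t) \<in> convex_minorants"
  proof (rule affine_in_convex_minorants)
    fix k assume k: "k \<le> K"
    show "S K - M + M * F k \<le> S k"
    proof (cases "k = K")
      case False
      then have "F k \<le> F (K - 1)" using cum_prob_mono[of k "K - 1"] k by simp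
      then have "q K \<le> 1 - F k" using cum_prob_diff[of K] K_pos cum_prob_K by simp
      then have "M * q K \<le> M * (1 - F k)" using qK by (intro mult_left_mono) (auto simp: M_def)
      moreover have "M * q K = (\<Sum>k=0..K. \<bar>S K - S k\<bar>)" using qK by (simp add: M_def)
      moreover have "\<bar>S K - S k\<bar> \<le> (\<Sum>k=0..K. \<bar>S K - S k\<bar>)" using k by (intro member_le_sum) auto
      ultimately show ?thesis by (simp add: algebra_simps)
    qed (simp add: cum_prob_K)
  qed
  then have "S K \<le> H 1" using le_Hconv[of _ 1] by fastforce
  moreover have "H 1 \<le> S K" using Hconv_le_Sinterp[of 1] Sinterp_at_breakpoint[of K] cum_prob_K by simp
  ultimately show ?thesis by simp
qed

definition env :: "nat \<Rightarrow> real" where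
  "env k = H (F k)"

lemma ironing_env: "ironing K w q env \<alpha>"
proof
  show "env k \<le> S k" if "k \<le> K" for k
    using Hconv_le_Sinterp[of "F k"] Sinterp_at_breakpoint[OF that] cum_prob_bounds[OF that]
    by (simp add: env_def)
qed (use K_pos q_pos cum_prob_K Hconv_0 Hconv_1 in \<open>simp_all add: env_def cum_prob_0\<close>)

abbreviation "ironed \<equiv> ironing.ironed_vv q env"

lemma ironed_eq: "ironed k = (env k - env (k - 1)) / q k"
  by (rule ironing.ironed_vv_def[OF ironing_env])

lemma ivv_vval: "1 \<le> k \<Longrightarrow> k \<le> K \<Longrightarrow> ivv \<alpha> V f i (w k) = ironed k"
  using cum_prob_diff[of k] by (simp add: ivv_def ironed_eq vidx_vval Fpt_eq env_def)

lemma env_step: "1 \<le> k \<Longrightarrow> k \<le> K \<Longrightarrow> env k = env (k - 1) + ironed k * q k"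
  using q_pos[of k] by (simp add: ironed_eq)

lemma ironed_mono_Suc:
  assumes k: "1 \<le> k" "k < K"
  shows "ironed k \<le> ironed (Suc k)"
proof -
  have "(env k - env (k - 1)) * (F (Suc k) - F k) \<le> (env (Suc k) - env k) * (F k - F (k - 1))"
    unfolding env_def
    by (rule convex_on_slopes_le[OF convex_on_Hconv])
       (use cum_prob_bounds[of "k - 1"] cum_prob_bounds[of "Suc k"] cum_prob_strict_mono[of "k - 1" k]
          cum_prob_strict_mono[of k "Suc k"] k in auto)
  then have "ironed k * q k * q (Suc k) \<le> ironed (Suc k) * q (Suc k) * q k"
    using env_step[of k] env_step[of "Suc k"] cum_prob_diff[of k] cum_prob_diff[of "Suc k"] k by simp
  then show ?thesis using q_pos[of k] q_pos[of "Suc k"] k by (simp add: mult.commute mult.left_commute)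
qed

lemma ironed_mono: "1 \<le> j \<Longrightarrow> j \<le> k \<Longrightarrow> k \<le> K \<Longrightarrow> ironed j \<le> ironed k"
proof (induction k)
  case (Suc k)
  then show ?case using ironed_mono_Suc[of k] by (cases "j = Suc k") auto
qed simp

lemma line_le_Hconv_outside:
  assumes k: "1 \<le> k" "k < K" and t: "0 \<le> t" "t \<le> 1" "t \<le> F (k - 1) \<or> F (Suc k) \<le> t"
    and slope: "ironed k \<le> m" "m \<le> ironed (Suc k)"
    and prev: "c + m * F (k - 1) \<le> env (k - 1)" and succ: "c + m * F (Suc k) \<le> env (Suc k)"
  shows "c + m * t \<le> H t"
  using t(3)
proof
  assume left: "t \<le> F (k - 1)"
  have "H (F (k - 1)) + ironed k * (t - F (k - 1)) \<le> H t"
    by (rule convex_on_above_chord_line[OF convex_on_Hconv])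
       (use k t left cum_prob_bounds[of "k - 1"] cum_prob_bounds[of k] cum_prob_strict_mono[of "k - 1" k]
          env_step[of k] cum_prob_diff[of k] in \<open>auto simp flip: env_def\<close>)
  moreover have "m * (t - F (k - 1)) \<le> ironed k * (t - F (k - 1))"
    using left slope(1) by (intro mult_right_mono_neg) auto
  ultimately show ?thesis using prev by (simp add: algebra_simps flip: env_def)
next
  assume right: "F (Suc k) \<le> t"
  have "H (F k) + ironed (Suc k) * (t - F k) \<le> H t"
    by (rule convex_on_above_chord_line[OF convex_on_Hconv])
       (use k t right cum_prob_bounds[of k] cum_prob_bounds[of "Suc k"] cum_prob_strict_mono[of k "Suc k"]
          env_step[of "Suc k"] cum_prob_diff[of "Suc k"] in \<open>auto simp flip: env_def\<close>)
  moreover have "env k + ironed (Suc k) * (t - F k) = env (Suc k) + ironed (Suc k) * (t - F (Suc k))"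
    using env_step[of "Suc k"] cum_prob_diff[of "Suc k"] k by (simp add: algebra_simps)
  moreover have "m * (t - F (Suc k)) \<le> ironed (Suc k) * (t - F (Suc k))"
    using right slope(2) by (intro mult_right_mono) auto
  ultimately show ?thesis using succ by (simp add: algebra_simps flip: env_def)
qed

lemma line_le_Sinterp_between:
  assumes k: "1 \<le> k" "k < K" and t: "F (k - 1) \<le> t" "t \<le> F (Suc k)"
    and "c + m * F (k - 1) \<le> S (k - 1)" "c + m * F k \<le> S k" "c + m * F (Suc k) \<le> S (Suc k)"
  shows "c + m * t \<le> Si t"
  using assms affine_le_Sinterp_on_segment[of k t c m] affine_le_Sinterp_on_segment[of "Suc k" t c m]
  by (cases "t \<le> F k") auto

text \<open>If the envelope had a kink at such a breakpoint, a line through a point slightly above it,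
  with slope strictly between the two adjacent slopes, would give a larger convex minorant.\<close>

lemma ironed_eq_Suc_if_env_below:
  assumes k: "1 \<le> k" "k < K" and below: "env k < S k"
  shows "ironed k = ironed (Suc k)"
proof (rule ccontr)
  assume "ironed k \<noteq> ironed (Suc k)"
  then have lt: "ironed k < ironed (Suc k)" using ironed_mono_Suc[OF k] by simp
  define e where "e = (ironed (Suc k) - ironed k) / 2"
  define \<delta> where "\<delta> = min (S k - env k) (e * min (q k) (q (Suc k)))"
  define c where "c = env k + \<delta> - (ironed k + e) * F k"
  have q: "0 < q k" "0 < q (Suc k)" using q_pos k by auto
  have e: "0 < e" "ironed (Suc k) = ironed k + 2 * e"
    using lt by (simp_all add: e_def field_simps)
  have \<delta>: "0 < \<delta>" "\<delta> \<le> S k - env k" "\<delta> \<le> e * q k" "\<delta> \<le> e * q (Suc k)"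
    using below e q by (auto simp: \<delta>_def min_le_iff_disj)
  have F_step: "F (k - 1) = F k - q k" "F (Suc k) = F k + q (Suc k)"
    using cum_prob_diff[of k] cum_prob_diff[of "Suc k"] k by auto
  have env_le: "env (k - 1) \<le> S (k - 1)" "env (Suc k) \<le> S (Suc k)"
    using ironing.h_le[OF ironing_env] k by auto
  have prev: "c + (ironed k + e) * F (k - 1) \<le> env (k - 1)"
    using \<delta>(3) env_step[of k] k unfolding c_def F_step by (simp add: algebra_simps)
  have succ: "c + (ironed k + e) * F (Suc k) \<le> env (Suc k)"
    using \<delta>(4) env_step[of "Suc k"] k e(2) unfolding c_def F_step by (simp add: algebra_simps)
  have at_k: "c + (ironed k + e) * F k = env k + \<delta>" by (simp add: c_def)
  have line_le: "c + (ironed k + e) * t \<le> max (H t) (Si t)" if t: "0 \<le> t" "t \<le> 1" for t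
  proof (cases "t \<le> F (k - 1) \<or> F (Suc k) \<le> t")
    case True
    then show ?thesis
      using line_le_Hconv_outside[OF k t True _ _ prev succ] lt e(1) e(2) by simp
  next
    case False
    have "c + (ironed k + e) * t \<le> Si t"
      by (rule line_le_Sinterp_between[OF k]) (use False prev succ env_le at_k \<delta>(2) in auto)
    then show ?thesis by simp
  qed
  have "(\<lambda>t. max (H t) (c + (ironed k + e) * t)) \<in> convex_minorants"
    unfolding convex_minorants_def
    using convex_on_max[OF convex_on_Hconv convex_on_affine_real] Hconv_le_Sinterp line_le
    by (auto simp: max_def)
  then have "c + (ironed k + e) * F k \<le> H (F k)"
    using le_Hconv[of _ "F k"] cum_prob_bounds[of k] k by fastforce
  then show False using at_k \<delta>(1) by (simp add: env_def)
qed


lemma pay_formula_fun_upd: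
  "1 \<le> k \<Longrightarrow> k \<le> K \<Longrightarrow>
    pay_formula V a (v(i := w k)) i = myerson_payment w (\<lambda>l. a (v(i := w l)) i) k"
  by (simp add: pay_formula_def myerson_payment_def vidx_vval Let_def)

end

lemma sum_PiE_split:
  fixes V :: "'n::finite \<Rightarrow> 'b set" and Q :: "('n \<Rightarrow> 'b) \<Rightarrow> real"
  shows "(\<Sum>v\<in>PiE UNIV V. Q v) = (\<Sum>x\<in>V i. \<Sum>w\<in>PiE (UNIV - {i}) V. Q (w(i := x)))"
proof -
  have "PiE UNIV V = (\<lambda>(y, g). g(i := y)) ` (V i \<times> PiE (UNIV - {i}) V)"
    using PiE_insert_eq[of i "UNIV - {i}" V] by (simp add: insert_absorb)
  moreover have "inj_on (\<lambda>(y, g). g(i := y)) (V i \<times> PiE (UNIV - {i}) V)"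
    by (rule inj_combinator) simp
  ultimately show ?thesis by (simp add: sum.reindex sum.cartesian_product case_prod_unfold)
qed

lemma prof_prob_fun_upd:
  fixes f :: "'n::finite \<Rightarrow> real \<Rightarrow> real"
  shows "prof_prob f (w(i := x)) = f i x * (\<Prod>j\<in>UNIV - {i}. f j (w j))"
  unfolding prof_prob_def by (subst prod.remove[of UNIV i]) (auto intro!: prod.cong)

lemma expectation_split_bidder:
  fixes V :: "'n::finite \<Rightarrow> real set" and f :: "'n \<Rightarrow> real \<Rightarrow> real"
  shows "(\<Sum>v\<in>PiE UNIV V. prof_prob f v * Q v)
     = (\<Sum>x\<in>V i. f i x * (\<Sum>w\<in>PiE (UNIV - {i}) V. (\<Prod>j\<in>UNIV - {i}. f j (w j)) * Q (w(i := x))))"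
  unfolding sum_PiE_split[where V=V and i=i] prof_prob_fun_upd
  by (simp add: sum_distrib_left mult.assoc)

lemma expectation_split_others:
  fixes V :: "'n::finite \<Rightarrow> real set" and f :: "'n \<Rightarrow> real \<Rightarrow> real"
  shows "(\<Sum>v\<in>PiE UNIV V. prof_prob f v * Q v)
     = (\<Sum>w\<in>PiE (UNIV - {i}) V. (\<Prod>j\<in>UNIV - {i}. f j (w j)) * (\<Sum>x\<in>V i. f i x * Q (w(i := x))))"
  unfolding expectation_split_bidder[where i=i] sum_distrib_left
  by (subst sum.swap) (simp add: algebra_simps)

definition linear_maximizer :: "(real^'n) set \<Rightarrow> ('n::finite \<Rightarrow> real) \<Rightarrow> real^'n \<Rightarrow> bool" where
  "linear_maximizer A c x \<longleftrightarrow> x \<in> A \<and> (\<forall>y\<in>A. (\<Sum>i\<in>UNIV. c i * y $ i) \<le> (\<Sum>i\<in>UNIV. c i * x $ i))"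

lemma linear_maximizer_coord_mono:
  fixes c c' :: "'n::finite \<Rightarrow> real"
  assumes x: "linear_maximizer A c x" and x': "linear_maximizer A c' x'"
    and same: "\<And>j. j \<noteq> i \<Longrightarrow> c' j = c j" and lt: "c i < c' i"
  shows "x $ i \<le> x' $ i"
proof -
  have diff: "(\<Sum>j\<in>UNIV. c' j * y $ j) - (\<Sum>j\<in>UNIV. c j * y $ j) = (c' i - c i) * y $ i" for y :: "real^'n"
  proof -
    have "(\<Sum>j\<in>UNIV. c' j * y $ j) - (\<Sum>j\<in>UNIV. c j * y $ j) = (\<Sum>j\<in>UNIV. (c' j - c j) * y $ j)"
      by (simp add: sum_subtractf left_diff_distrib)
    also have "\<dots> = (c' i - c i) * y $ i"
      using same by (subst sum.remove[of UNIV i]) (auto intro: sum.neutral)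
    finally show ?thesis .
  qed
  have "(\<Sum>j\<in>UNIV. c j * x' $ j) \<le> (\<Sum>j\<in>UNIV. c j * x $ j)"
    and "(\<Sum>j\<in>UNIV. c' j * x $ j) \<le> (\<Sum>j\<in>UNIV. c' j * x' $ j)"
    using x x' by (auto simp: linear_maximizer_def)
  then have "(c' i - c i) * x $ i \<le> (c' i - c i) * x' $ i" using diff[of x] diff[of x'] by linarith
  then show ?thesis using lt by simp
qed

lemma linear_maximizer_exists:
  assumes "compact A" "A \<noteq> {}"
  shows "\<exists>x. linear_maximizer A c x"
proof -
  have "continuous_on A (\<lambda>x. \<Sum>i\<in>UNIV. c i * x $ i)" by (intro continuous_intros)
  then show ?thesis
    using continuous_attains_sup[OF assms] by (auto simp: linear_maximizer_def)
qed

section \<open>Total dual integrality\<close>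

lemma polyhedron_two_sided_perturbation:
  fixes r :: "nat \<Rightarrow> 'a::real_inner"
  assumes x0: "\<And>j. j < m \<Longrightarrow> r j \<bullet> x0 \<le> b j"
    and d: "\<And>j. j < m \<Longrightarrow> r j \<bullet> x0 = b j \<Longrightarrow> r j \<bullet> d = 0"
  obtains \<epsilon> where "0 < \<epsilon>" "\<And>j. j < m \<Longrightarrow> r j \<bullet> (x0 + \<epsilon> *\<^sub>R d) \<le> b j"
    "\<And>j. j < m \<Longrightarrow> r j \<bullet> (x0 - \<epsilon> *\<^sub>R d) \<le> b j"
proof
  define N where "N = {j. j < m \<and> r j \<bullet> x0 \<noteq> b j}"
  define \<epsilon> where "\<epsilon> = Min (insert 1 ((\<lambda>j. (b j - r j \<bullet> x0) / (\<bar>r j \<bullet> d\<bar> + 1)) ` N))"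
  have slack: "r j \<bullet> x0 < b j" if "j \<in> N" for j using x0[of j] that by (auto simp: N_def)
  show \<epsilon>: "0 < \<epsilon>"
    unfolding \<epsilon>_def using slack by (subst Min_gr_iff) (auto simp: N_def intro!: divide_pos_pos)
  have "\<epsilon> * \<bar>r j \<bullet> d\<bar> \<le> b j - r j \<bullet> x0" if "j \<in> N" for j
  proof -
    have "\<epsilon> \<le> (b j - r j \<bullet> x0) / (\<bar>r j \<bullet> d\<bar> + 1)" unfolding \<epsilon>_def using that by (intro Min_le) (auto simp: N_def)
    then have "\<epsilon> * (\<bar>r j \<bullet> d\<bar> + 1) \<le> b j - r j \<bullet> x0" by (simp add: le_divide_eq add_pos_nonneg)
    then show ?thesis using \<epsilon> by (simp add: algebra_simps)
  qed
  then have bound: "\<bar>\<epsilon> * (r j \<bullet> d)\<bar> \<le> b j - r j \<bullet> x0" if "j < m" for j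
    using d[OF that] \<epsilon> that by (cases "j \<in> N") (auto simp: N_def abs_mult)
  show "r j \<bullet> (x0 + \<epsilon> *\<^sub>R d) \<le> b j" "r j \<bullet> (x0 - \<epsilon> *\<^sub>R d) \<le> b j" if "j < m" for j
    using bound[OF that] by (auto simp: inner_add_right inner_diff_right abs_le_iff)
qed

lemma extreme_point_active_rows_span:
  fixes r :: "nat \<Rightarrow> 'a::euclidean_space"
  assumes "x0 extreme_point_of {x. \<forall>j<m. r j \<bullet> x \<le> b j}"
  shows "span (r ` {j. j < m \<and> r j \<bullet> x0 = b j}) = UNIV"
proof (rule ccontr)
  let ?T = "{j. j < m \<and> r j \<bullet> x0 = b j}"
  assume "span (r ` ?T) \<noteq> UNIV"
  then obtain d where "d \<noteq> 0" and d: "\<And>y. y \<in> span (r ` ?T) \<Longrightarrow> orthogonal d y"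
    by (metis orthogonal_to_subspace_exists_gen span_UNIV top.not_eq_extremum subset_UNIV)
  have x0: "\<forall>j<m. r j \<bullet> x0 \<le> b j" using assms by (simp add: extreme_point_of_def)
  have "r j \<bullet> d = 0" if "j < m" "r j \<bullet> x0 = b j" for j
    using d[of "r j"] that span_base[of "r j" "r ` ?T"] by (auto simp: orthogonal_def inner_commute)
  then obtain \<epsilon> where \<epsilon>: "0 < \<epsilon>" "\<And>j. j < m \<Longrightarrow> r j \<bullet> (x0 + \<epsilon> *\<^sub>R d) \<le> b j"
    "\<And>j. j < m \<Longrightarrow> r j \<bullet> (x0 - \<epsilon> *\<^sub>R d) \<le> b j"
    using polyhedron_two_sided_perturbation x0 by metis
  have "x0 - \<epsilon> *\<^sub>R d \<noteq> x0 + \<epsilon> *\<^sub>R d"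
  proof
    assume "x0 - \<epsilon> *\<^sub>R d = x0 + \<epsilon> *\<^sub>R d"
    then have "(2 * \<epsilon>) *\<^sub>R d = 0" by (simp add: algebra_simps flip: scaleR_2 scaleR_scaleR)
    then show False using \<epsilon>(1) \<open>d \<noteq> 0\<close> by simp
  qed
  moreover have "midpoint (x0 - \<epsilon> *\<^sub>R d) (x0 + \<epsilon> *\<^sub>R d) = x0" by (simp add: midpoint_def scaleR_2)
  ultimately have "x0 \<in> open_segment (x0 - \<epsilon> *\<^sub>R d) (x0 + \<epsilon> *\<^sub>R d)"
    using midpoint_in_open_segment by metis
  then show False using assms \<epsilon>(2,3) by (auto simp: extreme_point_of_def)
qed

lemma rational_common_denominator:
  fixes g :: "'n::finite \<Rightarrow> real"
  assumes "\<And>i. g i \<in> \<rat>"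
  obtains D :: int where "D > 0" "\<And>i. of_int D * g i \<in> \<int>"
proof -
  have "\<exists>d::int. d > 0 \<and> of_int d * g i \<in> \<int>" for i
  proof -
    obtain p q where "q > 0" "g i = of_int p / of_int q" using Rats_cases'[OF assms[of i]] by metis
    then show ?thesis by (intro exI[of _ q]) auto
  qed
  then obtain d where d: "\<And>i. d i > 0" "\<And>i. of_int (d i) * g i \<in> \<int>" by metis
  show ?thesis
  proof
    show "(\<Prod>i\<in>UNIV. d i) > 0" using d(1) by (intro prod_pos) auto
    fix i
    have "of_int (\<Prod>i\<in>UNIV. d i) * g i = of_int (\<Prod>j\<in>UNIV - {i}. d j) * (of_int (d i) * g i)"
      by (subst prod.remove[of UNIV i]) (auto simp: algebra_simps)
    also have "\<dots> \<in> \<int>" by (rule Ints_mult) (use d(2)[of i] in auto)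
    finally show "of_int (\<Prod>i\<in>UNIV. d i) * g i \<in> \<int>" .
  qed
qed

lemma add_mult_ceiling_nonneg:
  fixes c :: real and D :: int
  assumes "0 < D"
  shows "0 \<le> c + of_int D * of_int \<lceil>- c / of_int D\<rceil>"
proof -
  have "(- c / of_int D) * of_int D \<le> of_int \<lceil>- c / of_int D\<rceil> * of_int D"
    using assms by (intro mult_right_mono) auto
  then show ?thesis using assms by (simp add: mult.commute)
qed

lemma span_image_coeffs:
  fixes r :: "nat \<Rightarrow> 'a::real_vector"
  assumes "finite T" "x \<in> span (r ` T)"
  shows "\<exists>c. x = (\<Sum>j\<in>T. c j *\<^sub>R r j)"
  using assms(2)
proof (induction rule: span_induct)
  case base
  show ?case unfolding subspace_def
  proof (intro conjI ballI allI)
    show "0 \<in> Collect (\<lambda>x. \<exists>c. x = (\<Sum>j\<in>T. c j *\<^sub>R r j))" by (auto intro: exI[of _ "\<lambda>_. 0"])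
    fix x y assume "x \<in> Collect (\<lambda>x. \<exists>c. x = (\<Sum>j\<in>T. c j *\<^sub>R r j))" "y \<in> Collect (\<lambda>x. \<exists>c. x = (\<Sum>j\<in>T. c j *\<^sub>R r j))"
    then obtain c1 c2 where "x = (\<Sum>j\<in>T. c1 j *\<^sub>R r j)" "y = (\<Sum>j\<in>T. c2 j *\<^sub>R r j)" by auto
    then have "x + y = (\<Sum>j\<in>T. (c1 j + c2 j) *\<^sub>R r j)" by (simp add: sum.distrib scaleR_add_left)
    then show "x + y \<in> Collect (\<lambda>x. \<exists>c. x = (\<Sum>j\<in>T. c j *\<^sub>R r j))"
      unfolding mem_Collect_eq by (rule exI[of _ "\<lambda>j. c1 j + c2 j"])
  next
    fix a :: real and x assume "x \<in> Collect (\<lambda>x. \<exists>c. x = (\<Sum>j\<in>T. c j *\<^sub>R r j))"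
    then obtain c1 where "x = (\<Sum>j\<in>T. c1 j *\<^sub>R r j)" by auto
    then have "a *\<^sub>R x = (\<Sum>j\<in>T. (a * c1 j) *\<^sub>R r j)" by (simp add: scaleR_sum_right)
    then show "a *\<^sub>R x \<in> Collect (\<lambda>x. \<exists>c. x = (\<Sum>j\<in>T. c j *\<^sub>R r j))"
      unfolding mem_Collect_eq by (rule exI[of _ "\<lambda>j. a * c1 j"])
  qed
next
  case (step x)
  then obtain j where j: "j \<in> T" "x = r j" by auto
  have "x = (\<Sum>j'\<in>T. (if j' = j then 1 else 0) *\<^sub>R r j')"
    using j assms(1) by (simp add: if_distrib[of "\<lambda>c. c *\<^sub>R _"] sum.delta cong: if_cong)
  then show ?case by (rule exI[of _ "\<lambda>j'. if j' = j then 1 else 0"])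
qed

lemma dual_objective_at:
  fixes G :: "nat \<Rightarrow> 'n::finite \<Rightarrow> real"
  assumes "\<And>i. (\<Sum>j<m. G j i * \<psi> j) = c i"
  shows "(\<Sum>j<m. \<psi> j * (\<Sum>i\<in>UNIV. G j i * x $ i)) = (\<Sum>i\<in>UNIV. c i * x $ i)"
proof -
  have "(\<Sum>j<m. \<psi> j * (\<Sum>i\<in>UNIV. G j i * x $ i)) = (\<Sum>i\<in>UNIV. (\<Sum>j<m. G j i * \<psi> j) * x $ i)"
    by (simp add: sum_distrib_left sum_distrib_right sum.swap[of _ "{..<m}"] algebra_simps)
  then show ?thesis using assms by simp
qed

text \<open>Complementary slackness: a nonnegative combination of the rows that are tight at a feasible
  point is an optimal dual solution for the objective it generates, so by total dual integrality
  its value is an integer whenever that objective is integral.\<close>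

lemma TDI_tight_dual_value_integral:
  fixes G :: "nat \<Rightarrow> 'n::finite \<Rightarrow> real" and x0 :: "real^'n"
  assumes tdi: "TDI m G b" and b_int: "\<forall>j<m. b j \<in> \<int>"
    and x0: "\<forall>j<m. (\<Sum>i\<in>UNIV. G j i * x0 $ i) \<le> b j"
    and \<psi>_nonneg: "\<forall>j<m. 0 \<le> \<psi> j"
    and \<psi>_tight: "\<forall>j<m. \<psi> j \<noteq> 0 \<longrightarrow> (\<Sum>i\<in>UNIV. G j i * x0 $ i) = b j"
    and c_int: "\<forall>i. (\<Sum>j<m. G j i * \<psi> j) \<in> \<int>"
  shows "(\<Sum>j<m. \<psi> j * b j) \<in> \<int>"
proof -
  define c where "c i = (\<Sum>j<m. G j i * \<psi> j)" for i
  define S where "S = {\<psi> :: nat \<Rightarrow> real. (\<forall>j<m. 0 \<le> \<psi> j) \<and> (\<forall>i. (\<Sum>j<m. G j i * \<psi> j) = c i)}"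
  define obj where "obj \<psi> = (\<Sum>j<m. \<psi> j * b j)" for \<psi> :: "nat \<Rightarrow> real"
  have \<psi>S: "\<psi> \<in> S" using \<psi>_nonneg by (simp add: S_def c_def)
  have "obj \<psi> = (\<Sum>j<m. \<psi> j * (\<Sum>i\<in>UNIV. G j i * x0 $ i))"
    unfolding obj_def
  proof (intro sum.cong refl)
    fix j assume "j \<in> {..<m}"
    then show "\<psi> j * b j = \<psi> j * (\<Sum>i\<in>UNIV. G j i * x0 $ i)" using \<psi>_tight by (cases "\<psi> j = 0") auto
  qed
  also have "\<dots> = (\<Sum>i\<in>UNIV. c i * x0 $ i)" by (rule dual_objective_at) (simp add: c_def)
  finally have obj_\<psi>: "obj \<psi> = (\<Sum>i\<in>UNIV. c i * x0 $ i)" .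
  have minimal: "obj \<psi> \<le> obj \<psi>'" if "\<psi>' \<in> S" for \<psi>'
  proof -
    have "(\<Sum>i\<in>UNIV. c i * x0 $ i) = (\<Sum>j<m. \<psi>' j * (\<Sum>i\<in>UNIV. G j i * x0 $ i))"
      using that by (intro dual_objective_at[symmetric]) (simp add: S_def)
    also have "\<dots> \<le> obj \<psi>'"
      unfolding obj_def using that x0 by (intro sum_mono mult_left_mono) (auto simp: S_def)
    finally show ?thesis using obj_\<psi> by simp
  qed
  have "\<forall>i. c i \<in> \<int>" using c_int by (simp add: c_def)
  then have "(\<exists>\<psi>\<in>S. \<forall>\<psi>'\<in>S. obj \<psi> \<le> obj \<psi>') \<longrightarrow> (\<exists>\<psi>\<in>S. (\<forall>j<m. \<psi> j \<in> \<int>) \<and> (\<forall>\<psi>'\<in>S. obj \<psi> \<le> obj \<psi>'))"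
    using tdi unfolding TDI_def S_def obj_def Let_def by blast
  then obtain \<psi>' where \<psi>': "\<psi>' \<in> S" "\<forall>j<m. \<psi>' j \<in> \<int>" "obj \<psi>' \<le> obj \<psi>"
    using minimal \<psi>S by blast
  have "obj \<psi>' \<in> \<int>" using \<psi>'(2) b_int unfolding obj_def by (intro Ints_sum Ints_mult) auto
  moreover have "obj \<psi> = obj \<psi>'" using minimal[OF \<psi>'(1)] \<psi>'(3) by simp
  ultimately show ?thesis by (simp add: obj_def)
qed

lemma inner_vec_lambda: "(\<chi> i. g i) \<bullet> (x::real^'n) = (\<Sum>i\<in>UNIV. g i * x $ i)"
  by (simp add: inner_vec_def)

text \<open>At a point where the tight rows span, each unit vector is a combination of tight rows; adding
  integer multiples of the (scaled, integral) rows makes its coefficients nonnegative, and total dual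
  integrality then forces the coordinate to be an integer.\<close>

lemma TDI_vertex_integral:
  fixes G :: "nat \<Rightarrow> 'n::finite \<Rightarrow> real" and x0 :: "real^'n"
  assumes tdi: "TDI m G b" and G_rat: "\<forall>j<m. \<forall>i. G j i \<in> \<rat>" and b_int: "\<forall>j<m. b j \<in> \<int>"
    and x0: "\<forall>j<m. (\<Sum>i\<in>UNIV. G j i * x0 $ i) \<le> b j"
    and span: "span ((\<lambda>j. \<chi> i. G j i) ` {j. j < m \<and> (\<Sum>i\<in>UNIV. G j i * x0 $ i) = b j}) = UNIV"
  shows "x0 $ i \<in> \<int>"
proof -
  define T where "T = {j. j < m \<and> (\<Sum>i\<in>UNIV. G j i * x0 $ i) = b j}"
  have T: "finite T" "T \<subseteq> {..<m}" by (auto simp: T_def)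
  obtain c where c: "axis i (1::real) = (\<Sum>j\<in>T. c j *\<^sub>R (\<chi> i. G j i))"
    using span_image_coeffs[OF T(1), of "axis i 1" "\<lambda>j. \<chi> i. G j i"] span by (auto simp: T_def)
  have "x0 $ i = axis i (1::real) \<bullet> x0" by (simp add: inner_axis')
  also have "\<dots> = (\<Sum>j\<in>T. c j * b j)"
    unfolding c by (simp add: inner_sum_left inner_vec_lambda T_def)
  finally have x0_i: "x0 $ i = (\<Sum>j\<in>T. c j * b j)" .
  have "\<forall>j. \<exists>d::int. j < m \<longrightarrow> d > 0 \<and> (\<forall>i. of_int d * G j i \<in> \<int>)"
    using G_rat rational_common_denominator by metis
  then obtain D :: "nat \<Rightarrow> int" where D: "\<And>j. j < m \<Longrightarrow> D j > 0 \<and> (\<forall>i. of_int (D j) * G j i \<in> \<int>)"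
    by metis
  define z where "z j = \<lceil>- c j / of_int (D j)\<rceil>" for j
  define \<psi> where "\<psi> j = (if j \<in> T then c j + of_int (D j) * of_int (z j) else 0)" for j
  have \<psi>_nonneg: "0 \<le> \<psi> j" for j
    using D T add_mult_ceiling_nonneg[of "D j" "c j"] by (auto simp: \<psi>_def z_def)
  have sum_T: "(\<Sum>j<m. g j * \<psi> j) = (\<Sum>j\<in>T. g j * \<psi> j)" for g :: "nat \<Rightarrow> real"
    by (rule sum.mono_neutral_right) (use T in \<open>auto simp: \<psi>_def\<close>)
  have c_int: "(\<Sum>j<m. G j i' * \<psi> j) \<in> \<int>" for i'
  proof -
    have "(\<Sum>j<m. G j i' * \<psi> j) = (\<Sum>j\<in>T. c j * G j i') + (\<Sum>j\<in>T. of_int (z j) * (of_int (D j) * G j i'))"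
      unfolding sum_T by (simp add: \<psi>_def sum.distrib algebra_simps)
    also have "(\<Sum>j\<in>T. c j * G j i') = axis i (1::real) $ i'" unfolding c by (simp add: mult.commute)
    finally have "(\<Sum>j<m. G j i' * \<psi> j)
        = axis i (1::real) $ i' + (\<Sum>j\<in>T. of_int (z j) * (of_int (D j) * G j i'))" .
    moreover have "(\<Sum>j\<in>T. of_int (z j) * (of_int (D j) * G j i')) \<in> \<int>"
    proof (rule Ints_sum)
      fix j assume "j \<in> T"
      then have "of_int (D j) * G j i' \<in> \<int>" using D T by auto
      then show "of_int (z j) * (of_int (D j) * G j i') \<in> \<int>" by (rule Ints_mult[OF Ints_of_int])
    qed
    ultimately show ?thesis by (simp add: axis_def)
  qed
  have "(\<Sum>j<m. \<psi> j * b j) \<in> \<int>"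
  proof (rule TDI_tight_dual_value_integral[OF tdi b_int x0])
    show "\<forall>j<m. \<psi> j \<noteq> 0 \<longrightarrow> (\<Sum>i\<in>UNIV. G j i * x0 $ i) = b j" by (auto simp: \<psi>_def T_def)
  qed (use \<psi>_nonneg c_int in auto)
  moreover have "(\<Sum>j<m. \<psi> j * b j) = x0 $ i + (\<Sum>j\<in>T. of_int (z j) * of_int (D j) * b j)"
    using sum_T[of b] unfolding x0_i by (simp add: \<psi>_def sum.distrib algebra_simps mult.commute)
  moreover have "(\<Sum>j\<in>T. of_int (z j) * of_int (D j) * b j) \<in> \<int>"
    using b_int T by (intro Ints_sum Ints_mult) auto
  ultimately show ?thesis by (metis Ints_diff add_diff_cancel_right')
qed

theorem TDI_integral_linear_maximizer:
  fixes G :: "nat \<Rightarrow> 'n::finite \<Rightarrow> real" and A :: "(real^'n) set"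
  assumes G_rat: "\<forall>j<m. \<forall>i. G j i \<in> \<rat>" and b_int: "\<forall>j<m. b j \<in> \<int>"
    and A: "A = {x. \<forall>j<m. (\<Sum>i\<in>UNIV. G j i * x $ i) \<le> b j}" and tdi: "TDI m G b"
    and "compact A" "A \<noteq> {}"
  obtains x where "linear_maximizer A c x" "\<And>i. x $ i \<in> \<int>"
proof -
  define r where "r j = (\<chi> i. G j i)" for j
  have A_rows: "A = {x. \<forall>j<m. r j \<bullet> x \<le> b j}" using A by (simp add: r_def inner_vec_lambda)
  have "A = (\<Inter>j\<in>{..<m}. {x. r j \<bullet> x \<le> b j})" using A_rows by auto
  then have "convex A" by (simp add: convex_INT convex_halfspace_le)
  obtain xs where xs: "linear_maximizer A c xs" using linear_maximizer_exists[OF assms(5,6)] by blast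
  define F where "F = A \<inter> {x. (\<chi> i. c i) \<bullet> x = (\<chi> i. c i) \<bullet> xs}"
  have "F face_of A"
    unfolding F_def using xs \<open>convex A\<close>
    by (intro face_of_Int_supporting_hyperplane_le) (auto simp: linear_maximizer_def inner_vec_lambda)
  moreover have "compact F" "convex F" "F \<noteq> {}"
    using \<open>compact A\<close> \<open>convex A\<close> xs
    by (auto simp: F_def compact_Int_closed closed_hyperplane convex_Int convex_hyperplane linear_maximizer_def)
  then obtain x0 where "x0 extreme_point_of F" using extreme_point_exists_convex by blast
  ultimately have "x0 extreme_point_of A" "x0 \<in> F" using extreme_point_of_face by blast+
  show ?thesis
  proof
    show "linear_maximizer A c x0" using xs \<open>x0 \<in> F\<close> by (auto simp: F_def linear_maximizer_def inner_vec_lambda)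
    have "span (r ` {j. j < m \<and> r j \<bullet> x0 = b j}) = UNIV"
      using extreme_point_active_rows_span \<open>x0 extreme_point_of A\<close> unfolding A_rows by blast
    then show "x0 $ i \<in> \<int>" for i
      using \<open>x0 \<in> F\<close> by (intro TDI_vertex_integral[OF tdi G_rat b_int])
        (auto simp: F_def A r_def inner_vec_lambda)
  qed
qed

section \<open>The optimal auction\<close>

locale auction_setting =
  fixes V :: "'n::finite \<Rightarrow> real set" and f :: "'n \<Rightarrow> real \<Rightarrow> real" and \<alpha> :: real
  assumes finite_values: "\<And>i. finite (V i)" and values_nonempty: "\<And>i. V i \<noteq> {}"
    and pmf_pos: "\<And>i x. x \<in> V i \<Longrightarrow> 0 < f i x" and pmf_sum: "\<And>i. (\<Sum>x\<in>V i. f i x) = 1"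
    and \<alpha>_nonneg: "0 \<le> \<alpha>"
begin

lemma bidder: "bidder V f i"
  using finite_values values_nonempty pmf_pos pmf_sum by unfold_locales

lemma prof_prob_nonneg: "v \<in> PiE UNIV V \<Longrightarrow> 0 \<le> prof_prob f v"
  unfolding prof_prob_def using pmf_pos by (intro prod_nonneg) (auto simp: PiE_iff less_imp_le)

lemma others_prob_nonneg: "w \<in> PiE (UNIV - {i}) V \<Longrightarrow> 0 \<le> (\<Prod>j\<in>UNIV - {i}. f j (w j))"
  using pmf_pos by (intro prod_nonneg) (auto simp: PiE_iff less_imp_le)

lemma fun_upd_in_PiE: "w \<in> PiE (UNIV - {i}) V \<Longrightarrow> x \<in> V i \<Longrightarrow> w(i := x) \<in> PiE UNIV V"
  by (auto simp: PiE_iff)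

lemma Obj_eq_sum_bidders:
  "Obj \<alpha> V f a p = (\<Sum>i\<in>UNIV. \<Sum>v\<in>PiE UNIV V. prof_prob f v * (\<alpha> * p v i + (1 - \<alpha>) * (a v i * v i)))"
proof -
  have "Obj \<alpha> V f a p
      = (\<Sum>v\<in>PiE UNIV V. \<Sum>i\<in>UNIV. prof_prob f v * (\<alpha> * p v i + (1 - \<alpha>) * (a v i * v i)))"
    unfolding Obj_def Rev_def SW_def by (simp add: sum_distrib_left sum.distrib algebra_simps sum_subtractf)
  then show ?thesis by (simp add: sum.swap[of _ "PiE UNIV V"])
qed

lemma expected_bidder_objective_interim:
  "(\<Sum>v\<in>PiE UNIV V. prof_prob f v * (\<alpha> * p v i + (1 - \<alpha>) * (a v i * v i)))
   = (\<Sum>x\<in>V i. f i x * (\<alpha> * interim V f p i x + (1 - \<alpha>) * (x * interim V f a i x)))"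
  unfolding expectation_split_bidder[where i=i] interim_def
  by (intro sum.cong refl) (simp add: sum_distrib_left sum.distrib algebra_simps sum_subtractf)

lemma expected_weighted_allocation_interim:
  "(\<Sum>v\<in>PiE UNIV V. prof_prob f v * (g (v i) * a v i)) = (\<Sum>x\<in>V i. f i x * (g x * interim V f a i x))"
  unfolding expectation_split_bidder[where i=i] interim_def
  by (intro sum.cong refl) (simp add: sum_distrib_left algebra_simps)

lemma DSIC_imp_BIC:
  assumes DSIC: "DSIC V a p" shows "BIC V f a p"
  unfolding BIC_def
proof (intro allI ballI conjI)
  fix i x assume x: "x \<in> V i"
  have interim_utility: "interim V f a i b * x - interim V f p i b
      = (\<Sum>w\<in>PiE (UNIV - {i}) V. (\<Prod>j\<in>UNIV - {i}. f j (w j)) * (a (w(i := b)) i * x - p (w(i := b)) i))"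
    for b by (simp add: interim_def sum_distrib_right sum_distrib_left sum_subtractf algebra_simps)
  show "0 \<le> interim V f a i x * x - interim V f p i x"
    unfolding interim_utility
  proof (intro sum_nonneg mult_nonneg_nonneg others_prob_nonneg)
    fix w assume w: "w \<in> PiE (UNIV - {i}) V"
    have "0 \<le> a (w(i := x)) i * (w(i := x)) i - p (w(i := x)) i"
      using DSIC fun_upd_in_PiE[OF w x] unfolding DSIC_def by blast
    then show "0 \<le> a (w(i := x)) i * x - p (w(i := x)) i" by simp
  qed
  fix b assume b: "b \<in> V i"
  show "interim V f a i b * x - interim V f p i b \<le> interim V f a i x * x - interim V f p i x"
    unfolding interim_utility
  proof (intro sum_mono mult_left_mono others_prob_nonneg)
    fix w assume w: "w \<in> PiE (UNIV - {i}) V"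
    have "a ((w(i := x))(i := b)) i * (w(i := x)) i - p ((w(i := x))(i := b)) i
        \<le> a (w(i := x)) i * (w(i := x)) i - p (w(i := x)) i"
      using DSIC fun_upd_in_PiE[OF w x] b unfolding DSIC_def by blast
    then show "a (w(i := b)) i * x - p (w(i := b)) i \<le> a (w(i := x)) i * x - p (w(i := x)) i" by simp
  qed
qed

lemma bidder_objective_le_ironed:
  assumes BIC: "BIC V f a p"
  shows "(\<Sum>v\<in>PiE UNIV V. prof_prob f v * (\<alpha> * p v i + (1 - \<alpha>) * (a v i * v i)))
       \<le> (\<Sum>v\<in>PiE UNIV V. prof_prob f v * (ivv \<alpha> V f i (v i) * a v i))"
proof -
  interpret B: bidder V f i \<alpha> by (rule bidder)
  interpret ironing B.K B.w B.q B.env \<alpha> by (rule B.ironing_env)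
  define A where "A k = interim V f a i (B.w k)" for k
  define P where "P k = interim V f p i (B.w k)" for k
  have IR: "0 \<le> B.w 1 * A 1 - P 1"
    using BIC B.vval_mem[of 1] B.K_pos unfolding BIC_def A_def P_def by (auto simp: mult.commute)
  have IC: "B.w k * A j - P j \<le> B.w k * A k - P k" if "1 \<le> j" "j \<le> B.K" "1 \<le> k" "k \<le> B.K" for j k
    using BIC B.vval_mem[of j] B.vval_mem[of k] that unfolding BIC_def A_def P_def
    by (auto simp: mult.commute)
  have "(\<Sum>v\<in>PiE UNIV V. prof_prob f v * (\<alpha> * p v i + (1 - \<alpha>) * (a v i * v i)))
     = \<alpha> * (\<Sum>k=1..B.K. B.q k * P k) + (1 - \<alpha>) * (\<Sum>k=1..B.K. B.q k * B.w k * A k)"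
    unfolding expected_bidder_objective_interim B.sum_values A_def P_def
    by (simp add: sum_distrib_left sum.distrib algebra_simps sum_subtractf)
  also have "\<dots> \<le> (\<Sum>k=1..B.K. B.q k * B.ironed k * A k)"
  proof (rule objective_le_ironed_surplus[OF \<alpha>_nonneg])
    show "A k \<le> A (Suc k)" if "1 \<le> k" "k < B.K" for k
      using incentive_compatible_allocation_mono[OF B.vval_strict_mono[of k "Suc k"]]
        IC[of k "Suc k"] IC[of "Suc k" k] that by simp
    show "P k \<le> myerson_payment B.w A k" if "1 \<le> k" "k \<le> B.K" for k
      by (rule incentive_compatible_payment_le_myerson[of B.w A P, OF IR _ that]) (use IC in simp)
  qed
  also have "\<dots> = (\<Sum>v\<in>PiE UNIV V. prof_prob f v * (ivv \<alpha> V f i (v i) * a v i))"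
    unfolding expected_weighted_allocation_interim B.sum_values A_def
    by (intro sum.cong refl) (simp add: B.ivv_vval)
  finally show ?thesis .
qed

definition ironed_alloc :: "(('n \<Rightarrow> real) \<Rightarrow> real^'n) \<Rightarrow> ('n \<Rightarrow> real) \<Rightarrow> 'n \<Rightarrow> real" where
  "ironed_alloc sel v i = sel (\<lambda>j. ivv \<alpha> V f j (v j)) $ i"

lemma ironed_alloc_eq_if_ironed_eq:
  "ivv \<alpha> V f i x = ivv \<alpha> V f i y \<Longrightarrow> ironed_alloc sel (v(i := x)) i = ironed_alloc sel (v(i := y)) i"
  unfolding ironed_alloc_def by (rule arg_cong[where f = "\<lambda>c. sel c $ i"]) auto

lemma bidder_objective_ironed_alloc:
  fixes sel :: "('n \<Rightarrow> real) \<Rightarrow> real^'n"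
  defines "a \<equiv> ironed_alloc sel"
  shows "(\<Sum>v\<in>PiE UNIV V. prof_prob f v * (\<alpha> * pay_formula V a v i + (1 - \<alpha>) * (a v i * v i)))
       = (\<Sum>v\<in>PiE UNIV V. prof_prob f v * (ivv \<alpha> V f i (v i) * a v i))"
proof -
  interpret B: bidder V f i \<alpha> by (rule bidder)
  interpret ironing B.K B.w B.q B.env \<alpha> by (rule B.ironing_env)
  have "(\<Sum>x\<in>V i. f i x * (\<alpha> * pay_formula V a (w(i := x)) i + (1 - \<alpha>) * (a (w(i := x)) i * x)))
      = (\<Sum>x\<in>V i. f i x * (ivv \<alpha> V f i x * a (w(i := x)) i))" for w
  proof -
    define ak where "ak = (\<lambda>k. a (w(i := B.w k)) i)"
    have "(\<Sum>x\<in>V i. f i x * (\<alpha> * pay_formula V a (w(i := x)) i + (1 - \<alpha>) * (a (w(i := x)) i * x)))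
       = (\<Sum>k=1..B.K. B.q k * (\<alpha> * myerson_payment B.w ak k + (1 - \<alpha>) * (ak k * B.w k)))"
      unfolding B.sum_values by (intro sum.cong refl) (simp add: B.pay_formula_fun_upd ak_def)
    also have "\<dots> = \<alpha> * (\<Sum>k=1..B.K. B.q k * myerson_payment B.w ak k)
        + (1 - \<alpha>) * (\<Sum>k=1..B.K. B.q k * B.w k * ak k)"
      by (simp add: sum_distrib_left sum.distrib algebra_simps sum_subtractf)
    also have "\<dots> = (\<Sum>k=1..B.K. B.q k * B.ironed k * ak k)"
    proof (rule objective_eq_ironed_surplus)
      fix k assume "1 \<le> k" "k < B.K" "B.env k < B.S k"
      then show "ak k = ak (Suc k)"
        unfolding ak_def a_def
        by (intro ironed_alloc_eq_if_ironed_eq)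
           (simp add: B.ironed_eq_Suc_if_env_below B.ivv_vval[of k] B.ivv_vval[of "Suc k"])
    qed
    also have "\<dots> = (\<Sum>x\<in>V i. f i x * (ivv \<alpha> V f i x * a (w(i := x)) i))"
      unfolding B.sum_values by (intro sum.cong refl) (simp add: B.ivv_vval ak_def)
    finally show ?thesis .
  qed
  then show ?thesis unfolding expectation_split_others[where i=i] by simp
qed

lemma ironed_alloc_mono_own_value:
  assumes maximizer: "\<And>v. v \<in> PiE UNIV V \<Longrightarrow>
      linear_maximizer A (\<lambda>j. ivv \<alpha> V f j (v j)) (sel (\<lambda>j. ivv \<alpha> V f j (v j)))"
    and v: "v \<in> PiE UNIV V" and l: "1 \<le> l" "l \<le> l'" "l' \<le> card (V i)"
  shows "ironed_alloc sel (v(i := vval V i l)) i \<le> ironed_alloc sel (v(i := vval V i l')) i"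
proof -
  interpret B: bidder V f i \<alpha> by (rule bidder)
  have v_upd: "v(i := B.w k) \<in> PiE UNIV V" if "1 \<le> k" "k \<le> B.K" for k
    using v B.vval_mem[OF that] by (auto simp: PiE_iff)
  show ?thesis
  proof (cases "B.ironed l = B.ironed l'")
    case True
    then show ?thesis by (intro eq_refl ironed_alloc_eq_if_ironed_eq) (use l in \<open>simp add: B.ivv_vval\<close>)
  next
    case False
    then have "B.ironed l < B.ironed l'" using B.ironed_mono[OF l] by simp
    then show ?thesis
      unfolding ironed_alloc_def
      by (intro linear_maximizer_coord_mono[OF maximizer[OF v_upd] maximizer[OF v_upd]])
         (use l in \<open>auto simp: B.ivv_vval\<close>)
  qed
qed

lemma DSIC_ironed_alloc:
  assumes A_nonneg: "A \<subseteq> {x. \<forall>i. 0 \<le> x $ i}"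
    and maximizer: "\<And>v. v \<in> PiE UNIV V \<Longrightarrow>
      linear_maximizer A (\<lambda>j. ivv \<alpha> V f j (v j)) (sel (\<lambda>j. ivv \<alpha> V f j (v j)))"
  shows "DSIC V (ironed_alloc sel) (pay_formula V (ironed_alloc sel))"
  unfolding DSIC_def
proof (intro allI ballI conjI)
  fix i v assume v: "v \<in> PiE UNIV V"
  interpret B: bidder V f i \<alpha> by (rule bidder)
  define ak where "ak = (\<lambda>l. ironed_alloc sel (v(i := B.w l)) i)"
  have v_upd: "v(i := B.w l) \<in> PiE UNIV V" if "1 \<le> l" "l \<le> B.K" for l
    using v B.vval_mem[OF that] by (auto simp: PiE_iff)
  have nonneg: "0 \<le> ak l" if "1 \<le> l" "l \<le> B.K" for l
  proof -
    have "sel (\<lambda>j. ivv \<alpha> V f j ((v(i := B.w l)) j)) \<in> A"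
      using maximizer[OF v_upd[OF that]] by (simp add: linear_maximizer_def)
    then show ?thesis using A_nonneg by (auto simp: ak_def ironed_alloc_def)
  qed
  have mono: "ak l \<le> ak l'" if "1 \<le> l" "l \<le> l'" "l' \<le> B.K" for l l'
    unfolding ak_def by (rule ironed_alloc_mono_own_value[OF maximizer v that])
  have utility: "ironed_alloc sel (v(i := B.w l)) i * B.w k - pay_formula V (ironed_alloc sel) (v(i := B.w l)) i
      = B.w k * ak l - myerson_payment B.w ak l" if "1 \<le> l" "l \<le> B.K" for k l
    using B.pay_formula_fun_upd[OF that] by (simp add: ak_def mult.commute)
  define k where "k = vidx V i (v i)"
  have "v i \<in> V i" using v by (auto simp: PiE_iff)
  then have k: "1 \<le> k" "k \<le> B.K" "B.w k = v i" using B.vidx_mem by (auto simp: k_def)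
  then have v_eq: "v(i := B.w k) = v" by simp
  have w_mono: "B.w l \<le> B.w (Suc l)" if "1 \<le> l" "l < B.K" for l
    using B.vval_mono[of l "Suc l"] that by simp
  have "0 \<le> B.w k * ak k - myerson_payment B.w ak k"
    by (rule myerson_payment_individually_rational) (use w_mono nonneg k in auto)
  then show "0 \<le> ironed_alloc sel v i * v i - pay_formula V (ironed_alloc sel) v i"
    using utility[OF k(1,2), of k] by (simp add: v_eq k(3))
  fix b assume "b \<in> V i"
  define j where "j = vidx V i b"
  have j: "1 \<le> j" "j \<le> B.K" "B.w j = b" using B.vidx_mem \<open>b \<in> V i\<close> by (auto simp: j_def)
  have "B.w k * ak j - myerson_payment B.w ak j \<le> B.w k * ak k - myerson_payment B.w ak k"
    by (rule myerson_payment_incentive_compatible[where K = B.K and w = B.w and a = ak,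
          OF w_mono mono j(1,2) k(1,2)])
  then show "ironed_alloc sel (v(i := b)) i * v i - pay_formula V (ironed_alloc sel) (v(i := b)) i
      \<le> ironed_alloc sel v i * v i - pay_formula V (ironed_alloc sel) v i"
    using utility[OF j(1,2), of k] utility[OF k(1,2), of k] by (simp add: v_eq k(3) j(3))
qed

definition expected_ironed_welfare :: "(('n \<Rightarrow> real) \<Rightarrow> 'n \<Rightarrow> real) \<Rightarrow> real" where
  "expected_ironed_welfare a = (\<Sum>v\<in>PiE UNIV V. prof_prob f v * (\<Sum>i\<in>UNIV. ivv \<alpha> V f i (v i) * a v i))"

lemma expected_ironed_welfare_eq_sum_bidders:
  "expected_ironed_welfare a = (\<Sum>i\<in>UNIV. \<Sum>v\<in>PiE UNIV V. prof_prob f v * (ivv \<alpha> V f i (v i) * a v i))"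
  unfolding expected_ironed_welfare_def by (simp add: sum_distrib_left sum.swap[of _ UNIV])

lemma BIC_Obj_le_expected_ironed_welfare: "BIC V f a p \<Longrightarrow> Obj \<alpha> V f a p \<le> expected_ironed_welfare a"
  unfolding Obj_eq_sum_bidders expected_ironed_welfare_eq_sum_bidders
  by (intro sum_mono bidder_objective_le_ironed)

lemma Obj_ironed_alloc:
  "Obj \<alpha> V f (ironed_alloc sel) (pay_formula V (ironed_alloc sel)) = expected_ironed_welfare (ironed_alloc sel)"
  unfolding Obj_eq_sum_bidders expected_ironed_welfare_eq_sum_bidders
  by (intro sum.cong refl bidder_objective_ironed_alloc)

lemma expected_ironed_welfare_le_ironed_alloc:
  assumes "feasible A V a"
    and maximizer: "\<And>v. v \<in> PiE UNIV V \<Longrightarrow>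
      linear_maximizer A (\<lambda>j. ivv \<alpha> V f j (v j)) (sel (\<lambda>j. ivv \<alpha> V f j (v j)))"
  shows "expected_ironed_welfare a \<le> expected_ironed_welfare (ironed_alloc sel)"
  unfolding expected_ironed_welfare_def
proof (rule sum_mono)
  fix v assume v: "v \<in> PiE UNIV V"
  have "(\<chi> i. a v i) \<in> A" using assms(1) v by (simp add: feasible_def)
  then have "(\<Sum>i\<in>UNIV. ivv \<alpha> V f i (v i) * a v i) \<le> (\<Sum>i\<in>UNIV. ivv \<alpha> V f i (v i) * ironed_alloc sel v i)"
    using maximizer[OF v] by (auto simp: linear_maximizer_def ironed_alloc_def)
  with v show "prof_prob f v * (\<Sum>i\<in>UNIV. ivv \<alpha> V f i (v i) * a v i)
      \<le> prof_prob f v * (\<Sum>i\<in>UNIV. ivv \<alpha> V f i (v i) * ironed_alloc sel v i)"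
    by (intro mult_left_mono prof_prob_nonneg)
qed

lemma ironed_alloc_eq: "ironed_alloc sel = (\<lambda>v i. sel (\<lambda>j. ivv \<alpha> V f j (v j)) $ i)"
  by (simp add: fun_eq_iff ironed_alloc_def)

theorem ironed_alloc_optimal:
  assumes A_nonneg: "A \<subseteq> {x. \<forall>i. 0 \<le> x $ i}"
    and maximizer: "\<And>v. v \<in> PiE UNIV V \<Longrightarrow>
      linear_maximizer A (\<lambda>j. ivv \<alpha> V f j (v j)) (sel (\<lambda>j. ivv \<alpha> V f j (v j)))"
  shows "feasible A V (ironed_alloc sel) \<and> DSIC V (ironed_alloc sel) (pay_formula V (ironed_alloc sel)) \<and>
    (\<forall>a p. feasible A V a \<and> BIC V f a p \<longrightarrow>
      Obj \<alpha> V f a p \<le> Obj \<alpha> V f (ironed_alloc sel) (pay_formula V (ironed_alloc sel)))"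
proof (intro conjI allI impI)
  show "feasible A V (ironed_alloc sel)"
    using maximizer by (simp add: feasible_def linear_maximizer_def ironed_alloc_def vec_lambda_eta)
  show "DSIC V (ironed_alloc sel) (pay_formula V (ironed_alloc sel))"
    by (rule DSIC_ironed_alloc[OF A_nonneg maximizer])
  fix a p assume "feasible A V a \<and> BIC V f a p"
  then show "Obj \<alpha> V f a p \<le> Obj \<alpha> V f (ironed_alloc sel) (pay_formula V (ironed_alloc sel))"
    unfolding Obj_ironed_alloc
    using BIC_Obj_le_expected_ironed_welfare expected_ironed_welfare_le_ironed_alloc[OF _ maximizer]
    by (meson order_trans)
qed

lemma integral_auction_ironed_alloc:
  assumes "A \<subseteq> {x. \<forall>i. 0 \<le> x $ i}" and "\<And>c. sel c \<in> A" and "\<And>c i. sel c $ i \<in> \<int>"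
  shows "integral_auction V (ironed_alloc sel)"
  using assms by (force simp: integral_auction_def ironed_alloc_def Nats_altdef2)


lemma ironed_mechanism_optimal:
  assumes A_nonneg: "A \<subseteq> {x. \<forall>i. 0 \<le> x $ i}"
    and maximizer: "\<forall>v\<in>PiE UNIV V. sel (\<lambda>j. ivv \<alpha> V f j (v j)) \<in> A \<and>
      (\<forall>x\<in>A. (\<Sum>i\<in>UNIV. ivv \<alpha> V f i (v i) * x $ i)
              \<le> (\<Sum>i\<in>UNIV. ivv \<alpha> V f i (v i) * sel (\<lambda>j. ivv \<alpha> V f j (v j)) $ i))"
  shows "let a = (\<lambda>v i. sel (\<lambda>j. ivv \<alpha> V f j (v j)) $ i); p = pay_formula V a
      in feasible A V a \<and> DSIC V a p \<and>
        (\<forall>a' p'. feasible A V a' \<and> BIC V f a' p' \<longrightarrow> Obj \<alpha> V f a' p' \<le> Obj \<alpha> V f a p)"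
proof -
  have "feasible A V (ironed_alloc sel) \<and> DSIC V (ironed_alloc sel) (pay_formula V (ironed_alloc sel)) \<and>
    (\<forall>a p. feasible A V a \<and> BIC V f a p \<longrightarrow>
      Obj \<alpha> V f a p \<le> Obj \<alpha> V f (ironed_alloc sel) (pay_formula V (ironed_alloc sel)))"
    by (rule ironed_alloc_optimal[OF A_nonneg]) (use maximizer in \<open>simp add: linear_maximizer_def\<close>)
  then show ?thesis unfolding Let_def ironed_alloc_eq by blast
qed

lemma DSIC_optimal_imp_BIC_optimal:
  assumes "compact A" "A \<noteq> {}" "A \<subseteq> {x. \<forall>i. 0 \<le> x $ i}"
    and DSIC_optimal: "\<forall>a' p'. feasible A V a' \<and> DSIC V a' p' \<longrightarrow> Obj \<alpha> V f a' p' \<le> Obj \<alpha> V f a p"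
    and "feasible A V a'" "BIC V f a' p'"
  shows "Obj \<alpha> V f a' p' \<le> Obj \<alpha> V f a p"
proof -
  obtain sel where sel: "\<And>c. linear_maximizer A c (sel c)"
    using linear_maximizer_exists[OF assms(1,2)] by metis
  note optimal = ironed_alloc_optimal[OF assms(3) sel]
  have "Obj \<alpha> V f a' p' \<le> Obj \<alpha> V f (ironed_alloc sel) (pay_formula V (ironed_alloc sel))"
    using optimal assms(5,6) by blast
  also have "\<dots> \<le> Obj \<alpha> V f a p" using optimal DSIC_optimal by blast
  finally show ?thesis .
qed

lemma TDI_integral_BIC_optimal:
  assumes "compact A" "A \<noteq> {}" and A_nonneg: "A \<subseteq> {x. \<forall>i. 0 \<le> x $ i}"
    and G_rat: "\<forall>j<m. \<forall>i. G j i \<in> \<rat>" and b_int: "\<forall>j<m. b j \<in> \<int>"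
    and A_rows: "A = {x. \<forall>j<m. (\<Sum>i\<in>UNIV. G j i * x $ i) \<le> b j}" and tdi: "TDI m G b"
  shows "\<exists>a p. feasible A V a \<and> BIC V f a p \<and> integral_auction V a \<and>
      (\<forall>a' p'. feasible A V a' \<and> BIC V f a' p' \<longrightarrow> Obj \<alpha> V f a' p' \<le> Obj \<alpha> V f a p)"
proof -
  have "\<forall>c. \<exists>x. linear_maximizer A c x \<and> (\<forall>i. x $ i \<in> \<int>)"
  proof
    fix c
    obtain x where "linear_maximizer A c x" "\<And>i. x $ i \<in> \<int>"
      using TDI_integral_linear_maximizer[where c = c, OF G_rat b_int A_rows tdi assms(1,2)] by blast
    then show "\<exists>x. linear_maximizer A c x \<and> (\<forall>i. x $ i \<in> \<int>)" by blast
  qed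
  then obtain sel where sel: "\<And>c. linear_maximizer A c (sel c)" "\<And>c i. sel c $ i \<in> \<int>"
    by metis
  then have "integral_auction V (ironed_alloc sel)"
    by (intro integral_auction_ironed_alloc[OF A_nonneg]) (auto simp: linear_maximizer_def)
  then show ?thesis using ironed_alloc_optimal[OF A_nonneg sel(1)] DSIC_imp_BIC by blast
qed

end

theorem theorem4p1:
  fixes V :: "'n::finite \<Rightarrow> real set" and f :: "'n \<Rightarrow> real \<Rightarrow> real"
    and m :: nat and g :: "nat \<Rightarrow> real^'n \<Rightarrow> real" and A :: "(real^'n) set" and \<alpha> :: real
  assumes V_fin: "\<forall>i. finite (V i) \<and> V i \<noteq> {} \<and> V i \<subseteq> {0..}"
    and f_pmf: "\<forall>i. (\<forall>x\<in>V i. 0 < f i x) \<and> (\<Sum>x\<in>V i. f i x) = 1"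
    and A_def: "A = {x. \<forall>j<m. g j x \<le> 0}"
    and g_convex: "\<forall>j<m. convex_on UNIV (g j)"
    and g_C1: "\<forall>j<m. \<exists>D. (\<forall>x. (g j has_derivative blinfun_apply (D x)) (at x)) \<and> continuous_on UNIV D"
    and A_nonempty: "A \<noteq> {}"
    and A_compact: "compact A"
    and A_nonneg: "A \<subseteq> {x. \<forall>i. 0 \<le> x $ i}"
    and \<alpha>: "0 \<le> \<alpha>" "\<alpha> \<le> 1"
  shows
   "((\<exists>m' G b. (\<forall>j<m'. \<forall>i. G j i \<in> \<rat>) \<and> (\<forall>j<m'. b j \<in> \<int>) \<and>
        A = {x. \<forall>j<m'. (\<Sum>i\<in>UNIV. G j i * x $ i) \<le> b j} \<and> TDI m' G b)
      \<longrightarrow> (\<exists>a p. feasible A V a \<and> BIC V f a p \<and> integral_auction V a \<and>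
             (\<forall>a' p'. feasible A V a' \<and> BIC V f a' p' \<longrightarrow> Obj \<alpha> V f a' p' \<le> Obj \<alpha> V f a p)))
    \<and> (\<forall>a p. feasible A V a \<and> DSIC V a p \<and>
             (\<forall>a' p'. feasible A V a' \<and> DSIC V a' p' \<longrightarrow> Obj \<alpha> V f a' p' \<le> Obj \<alpha> V f a p)
          \<longrightarrow> (\<forall>a' p'. feasible A V a' \<and> BIC V f a' p' \<longrightarrow> Obj \<alpha> V f a' p' \<le> Obj \<alpha> V f a p))
    \<and> (\<forall>sel :: ('n \<Rightarrow> real) \<Rightarrow> real^'n.
          (\<forall>v\<in>PiE UNIV V. sel (\<lambda>j. ivv \<alpha> V f j (v j)) \<in> A \<and>
             (\<forall>x\<in>A. (\<Sum>i\<in>UNIV. ivv \<alpha> V f i (v i) * x $ i)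
                     \<le> (\<Sum>i\<in>UNIV. ivv \<alpha> V f i (v i) * sel (\<lambda>j. ivv \<alpha> V f j (v j)) $ i)))
        \<longrightarrow> (let a = (\<lambda>v i. sel (\<lambda>j. ivv \<alpha> V f j (v j)) $ i); p = pay_formula V a
             in feasible A V a \<and> DSIC V a p \<and>
                (\<forall>a' p'. feasible A V a' \<and> BIC V f a' p' \<longrightarrow> Obj \<alpha> V f a' p' \<le> Obj \<alpha> V f a p)))"
proof -
  \<comment> \<open>The description of \<open>A\<close> by the convex \<open>g j\<close>, the nonnegativity of values and \<open>\<alpha> \<le> 1\<close>
    are not needed: only compactness and nonnegativity of \<open>A\<close> enter the argument.\<close>
  interpret auction_setting V f \<alpha> using V_fin f_pmf \<alpha>(1) by unfold_locales auto
  note A = A_compact A_nonempty A_nonneg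
  show ?thesis
    using TDI_integral_BIC_optimal[OF A] DSIC_optimal_imp_BIC_optimal[OF A]
      ironed_mechanism_optimal[OF A_nonneg]
    by blast
qed

end
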